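(* Let $\mathcal O$ be an order in a definite quaternion algebra $H$ over $\mathbb Q$, $\mathfrak a$ a left $\mathcal O$-ideal and $m\ge1$. Then $T_m(\mathfrak a)=\{\mathfrak b\text{ left }\mathcal O\text{-ideal}:\mathfrak b\subseteq\mathfrak a,\ [\mathfrak a:\mathfrak b]=m^2\}$. Moreover $m\mathfrak a\subseteq\mathfrak b$ for every $\mathfrak b\in T_m(\mathfrak a)$; in particular, $\mathfrak b\in T_m(\mathfrak a)$ if and only if $m\mathfrak a\in T_m(\mathfrak b)$.
   Context: $N$ reduced norm; for a lattice $\mathfrak a$, $N(\mathfrak a)=\gcd\{N(x):x\in\mathfrak a\}$. A left $\mathcal O$-ideal is a lattice $\mathfrak a$ with $\mathfrak a\otimes\mathbb Z_q=\mathcal O_qx_q$, $x_q\in H_q^\times$, for every prime $q$. $T_m(\mathfrak a)=\{\mathfrak b\text{ left }\mathcal O\text{-ideal}:\mathfrak b\subseteq\mathfrak a,\ N(\mathfrak b)=mN(\mathfrak a)\}$. *)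

theory Defs
  imports Complex_Main "HOL-Computational_Algebra.Primes"
begin

text \<open>Elements x0 + x1 i + x2 j + x3 k of the quaternion algebra (a,b)_Q with
  i^2 = a, j^2 = b, k = ij = -ji.  Every definite quaternion algebra over Q is
  isomorphic to (a,b)_Q for some rationals a < 0, b < 0.\<close>

datatype quat = Quat (q0: rat) (q1: rat) (q2: rat) (q3: rat)

instantiation quat :: ab_group_add
begin
definition "0 = Quat 0 0 0 0"
definition "x + y = Quat (q0 x + q0 y) (q1 x + q1 y) (q2 x + q2 y) (q3 x + q3 y)"
definition "x - y = Quat (q0 x - q0 y) (q1 x - q1 y) (q2 x - q2 y) (q3 x - q3 y)"
definition "- x = Quat (- q0 x) (- q1 x) (- q2 x) (- q3 x)"
instance
  by standard (auto simp: zero_quat_def plus_quat_def minus_quat_def uminus_quat_def)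
end

definition qscale :: "rat \<Rightarrow> quat \<Rightarrow> quat" where
  "qscale r x = Quat (r * q0 x) (r * q1 x) (r * q2 x) (r * q3 x)"

definition qone :: quat where "qone = Quat 1 0 0 0"

definition qmul :: "rat \<Rightarrow> rat \<Rightarrow> quat \<Rightarrow> quat \<Rightarrow> quat" where
  "qmul a b x y = Quat
     (q0 x * q0 y + a * q1 x * q1 y + b * q2 x * q2 y - a * b * q3 x * q3 y)
     (q0 x * q1 y + q1 x * q0 y - b * q2 x * q3 y + b * q3 x * q2 y)
     (q0 x * q2 y + q2 x * q0 y + a * q1 x * q3 y - a * q3 x * q1 y)
     (q0 x * q3 y + q3 x * q0 y + q1 x * q2 y - q2 x * q1 y)"

definition qnrd :: "rat \<Rightarrow> rat \<Rightarrow> quat \<Rightarrow> rat" where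
  "qnrd a b x = q0 x ^ 2 - a * q1 x ^ 2 - b * q2 x ^ 2 + a * b * q3 x ^ 2"

definition definite_quat_alg :: "rat \<Rightarrow> rat \<Rightarrow> bool" where
  "definite_quat_alg a b \<longleftrightarrow> a < 0 \<and> b < 0"

definition qunit :: "rat \<Rightarrow> rat \<Rightarrow> quat \<Rightarrow> bool" where
  "qunit a b x \<longleftrightarrow> (\<exists>y. qmul a b x y = qone \<and> qmul a b y x = qone)"

definition is_lattice :: "quat set \<Rightarrow> bool" where
  "is_lattice L \<longleftrightarrow> (\<exists>v :: nat \<Rightarrow> quat.
      (\<forall>c :: nat \<Rightarrow> rat. (\<Sum>i<4. qscale (c i) (v i)) = 0 \<longrightarrow> (\<forall>i<4. c i = 0)) \<and>
      L = {(\<Sum>i<4. qscale (of_int (n i)) (v i)) | n :: nat \<Rightarrow> int. True})"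

definition is_order :: "rat \<Rightarrow> rat \<Rightarrow> quat set \<Rightarrow> bool" where
  "is_order a b O' \<longleftrightarrow> is_lattice O' \<and> qone \<in> O' \<and>
      (\<forall>x\<in>O'. \<forall>y\<in>O'. qmul a b x y \<in> O')"

definition zloc :: "nat \<Rightarrow> rat set" where
  "zloc q = {r. \<not> (int q dvd snd (quotient_of r))}"

text \<open>The Z_(q)-span of a subset of H, i.e. L \<otimes> Z_(q) for a lattice L.\<close>
definition loc_span :: "nat \<Rightarrow> quat set \<Rightarrow> quat set" where
  "loc_span q S = {(\<Sum>v\<in>F. qscale (c v) v) | F c. finite F \<and> F \<subseteq> S \<and> (\<forall>v\<in>F. c v \<in> zloc q)}"

definition left_ideal :: "rat \<Rightarrow> rat \<Rightarrow> quat set \<Rightarrow> quat set \<Rightarrow> bool" where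
  "left_ideal a b O' A \<longleftrightarrow> is_lattice A \<and>
     (\<forall>q. prime q \<longrightarrow> (\<exists>x. qunit a b x \<and>
        loc_span q A = {qmul a b y x | y. y \<in> loc_span q O'}))"

definition int_span :: "rat set \<Rightarrow> rat set" where
  "int_span S = {(\<Sum>r\<in>F. of_int (c r) * r) | F c. finite F \<and> F \<subseteq> S}"

text \<open>Norm of a lattice: the gcd of the reduced norms of its elements, i.e. the
  positive generator of the fractional ideal of Z generated by them.\<close>
definition lat_norm :: "rat \<Rightarrow> rat \<Rightarrow> quat set \<Rightarrow> rat" where
  "lat_norm a b L = (THE r. r > 0 \<and> int_span (qnrd a b ` L) = {of_int n * r | n. True})"

definition lat_index :: "quat set \<Rightarrow> quat set \<Rightarrow> nat" where
  "lat_index A B = card ((\<lambda>x. {x + y | y. y \<in> B}) ` A)"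

definition Tm :: "rat \<Rightarrow> rat \<Rightarrow> quat set \<Rightarrow> nat \<Rightarrow> quat set \<Rightarrow> quat set set" where
  "Tm a b O' m A = {B. left_ideal a b O' B \<and> B \<subseteq> A \<and> lat_norm a b B = of_nat m * lat_norm a b A}"

definition lat_smult :: "nat \<Rightarrow> quat set \<Rightarrow> quat set" where
  "lat_smult m A = qscale (of_nat m) ` A"

end

theory Submission
  imports Defs "HOL-Computational_Algebra.Squarefree" "HOL-Library.FuncSet"
begin

text \<open>Everything is reduced to the localisations at the primes q.  A left O-ideal A is locally
  principal, A_q = O_q x, and since the reduced norms of elements of O_q are q-integral, the
  q-adic valuation of the norm N(A) (the gcd of the reduced norms) is that of nrd x.  For
  B \<subseteq> A we get B_q = O_q z x with z \<in> O_q, and the q-part of the index [A : B] equals that of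
  [O x : O z x] = [O : O z].  The latter is nrd(z)^2: right multiplication by z and by its
  conjugate have the same index (they are intertwined by some w with w z = conj z w), and their
  composite is multiplication by nrd z, of index nrd(z)^4.  Comparing valuations at all primes
  gives [A : B] = (N(B) / N(A))^2.  If moreover N(B) = m N(A), then v_q(nrd z) = v_q(m), so
  (m / nrd z) conj z lies in O_q and maps B_q onto m A_q; hence m A \<subseteq> B, and the converse
  direction uses N(m A) = m^2 N(A).\<close>

section \<open>Quaternion arithmetic\<close>

lemma quat_eqI: "q0 x = q0 y \<Longrightarrow> q1 x = q1 y \<Longrightarrow> q2 x = q2 y \<Longrightarrow> q3 x = q3 y \<Longrightarrow> x = y"
  by (cases x; cases y) auto

lemma quat_comps [simp]:
  "q0 0 = 0" "q1 0 = 0" "q2 0 = 0" "q3 0 = 0"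
  "q0 (x + y) = q0 x + q0 y" "q1 (x + y) = q1 x + q1 y" "q2 (x + y) = q2 x + q2 y" "q3 (x + y) = q3 x + q3 y"
  "q0 (x - y) = q0 x - q0 y" "q1 (x - y) = q1 x - q1 y" "q2 (x - y) = q2 x - q2 y" "q3 (x - y) = q3 x - q3 y"
  "q0 (- x) = - q0 x" "q1 (- x) = - q1 x" "q2 (- x) = - q2 x" "q3 (- x) = - q3 x"
  "q0 (qscale r x) = r * q0 x" "q1 (qscale r x) = r * q1 x" "q2 (qscale r x) = r * q2 x" "q3 (qscale r x) = r * q3 x"
  "q0 qone = 1" "q1 qone = 0" "q2 qone = 0" "q3 qone = 0"
  by (simp_all add: zero_quat_def plus_quat_def minus_quat_def uminus_quat_def qscale_def qone_def)

lemma quat_sum_comps [simp]: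
  "q0 (sum f A) = (\<Sum>x\<in>A. q0 (f x))" "q1 (sum f A) = (\<Sum>x\<in>A. q1 (f x))"
  "q2 (sum f A) = (\<Sum>x\<in>A. q2 (f x))" "q3 (sum f A) = (\<Sum>x\<in>A. q3 (f x))"
  by (induct A rule: infinite_finite_induct; simp)+

lemma qmul_comps [simp]:
  "q0 (qmul a b x y) = q0 x * q0 y + a * q1 x * q1 y + b * q2 x * q2 y - a * b * q3 x * q3 y"
  "q1 (qmul a b x y) = q0 x * q1 y + q1 x * q0 y - b * q2 x * q3 y + b * q3 x * q2 y"
  "q2 (qmul a b x y) = q0 x * q2 y + q2 x * q0 y + a * q1 x * q3 y - a * q3 x * q1 y"
  "q3 (qmul a b x y) = q0 x * q3 y + q3 x * q0 y + q1 x * q2 y - q2 x * q1 y"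
  by (simp_all add: qmul_def)

lemma qscale_simps [simp]:
  "qscale 1 x = x" "qscale 0 x = 0" "qscale r 0 = 0"
  "qscale r (qscale s x) = qscale (r * s) x"
  by (auto intro!: quat_eqI)

lemma qscale_add_right: "qscale r (x + y) = qscale r x + qscale r y"
  and qscale_add_left: "qscale (r + s) x = qscale r x + qscale s x"
  and qscale_diff_right: "qscale r (x - y) = qscale r x - qscale r y"
  and qscale_diff_left: "qscale (r - s) x = qscale r x - qscale s x"
  and qscale_minus_right: "qscale r (- x) = - qscale r x"
  and qscale_minus_left: "qscale (- r) x = - qscale r x"
  by (auto intro!: quat_eqI simp: algebra_simps)

lemma qscale_sum_right: "qscale r (sum f A) = (\<Sum>x\<in>A. qscale r (f x))"
  by (induct A rule: infinite_finite_induct; simp add: qscale_add_right)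

lemma qmul_add_left: "qmul a b (x + y) z = qmul a b x z + qmul a b y z"
  and qmul_add_right: "qmul a b z (x + y) = qmul a b z x + qmul a b z y"
  and qmul_diff_left: "qmul a b (x - y) z = qmul a b x z - qmul a b y z"
  and qmul_diff_right: "qmul a b z (x - y) = qmul a b z x - qmul a b z y"
  and qmul_minus_left: "qmul a b (- x) z = - qmul a b x z"
  and qmul_minus_right: "qmul a b z (- x) = - qmul a b z x"
  and qmul_scale_left: "qmul a b (qscale r x) z = qscale r (qmul a b x z)"
  and qmul_scale_right: "qmul a b z (qscale r x) = qscale r (qmul a b z x)"
  and qmul_zero_left [simp]: "qmul a b 0 z = 0"
  and qmul_zero_right [simp]: "qmul a b z 0 = 0"
  and qmul_one_left [simp]: "qmul a b qone z = z"
  and qmul_one_right [simp]: "qmul a b z qone = z"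
  by (auto intro!: quat_eqI simp: algebra_simps)

lemma qmul_sum_left: "qmul a b (sum f A) z = (\<Sum>i\<in>A. qmul a b (f i) z)"
  by (induct A rule: infinite_finite_induct; simp add: qmul_add_left)

lemma qmul_sum_right: "qmul a b z (sum f A) = (\<Sum>i\<in>A. qmul a b z (f i))"
  by (induct A rule: infinite_finite_induct; simp add: qmul_add_right)

lemma qmul_assoc: "qmul a b (qmul a b x y) z = qmul a b x (qmul a b y z)"
  by (rule quat_eqI) (simp_all add: algebra_simps)

definition qconj :: "quat \<Rightarrow> quat" where
  "qconj x = Quat (q0 x) (- q1 x) (- q2 x) (- q3 x)"

lemma qconj_comps [simp]:
  "q0 (qconj x) = q0 x" "q1 (qconj x) = - q1 x" "q2 (qconj x) = - q2 x" "q3 (qconj x) = - q3 x"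
  by (simp_all add: qconj_def)

lemma qconj_eq_trace: "qconj x = qscale (2 * q0 x) qone - x"
  by (rule quat_eqI) simp_all

lemma qmul_conj_right: "qmul a b x (qconj x) = qscale (qnrd a b x) qone"
  by (rule quat_eqI) (simp_all add: qnrd_def algebra_simps power2_eq_square)

lemma qmul_conj_left: "qmul a b (qconj x) x = qscale (qnrd a b x) qone"
  by (rule quat_eqI) (simp_all add: qnrd_def algebra_simps power2_eq_square)

lemma qnrd_mult: "qnrd a b (qmul a b x y) = qnrd a b x * qnrd a b y"
  by (simp add: qnrd_def power2_eq_square algebra_simps)

lemma qnrd_scale: "qnrd a b (qscale r x) = r^2 * qnrd a b x"
  by (simp add: qnrd_def power2_eq_square algebra_simps)

lemma qnrd_one [simp]: "qnrd a b qone = 1"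
  by (simp add: qnrd_def)

lemma qmul_self: "qmul a b x x = qscale (2 * q0 x) x - qscale (qnrd a b x) qone"
  by (rule quat_eqI) (simp_all add: qnrd_def algebra_simps power2_eq_square)

lemma qnrd_pos:
  assumes "a < 0" "b < 0" "x \<noteq> 0"
  shows "qnrd a b x > 0"
proof -
  have ab: "a * b > 0" using assms by (simp add: mult_neg_neg)
  have t1: "- a * q1 x ^ 2 \<ge> 0" "- b * q2 x ^ 2 \<ge> 0" "a * b * q3 x ^ 2 \<ge> 0"
    using assms ab by (auto intro!: mult_nonneg_nonneg mult_nonpos_nonneg)
  have "q0 x \<noteq> 0 \<or> q1 x \<noteq> 0 \<or> q2 x \<noteq> 0 \<or> q3 x \<noteq> 0"
    using assms(3) by (auto intro: quat_eqI)
  then have "q0 x ^ 2 > 0 \<or> - a * q1 x ^ 2 > 0 \<or> - b * q2 x ^ 2 > 0 \<or> a * b * q3 x ^ 2 > 0"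
    using assms ab by (auto intro!: mult_pos_pos mult_neg_pos)
  moreover have "q0 x ^ 2 \<ge> 0" by simp
  ultimately show ?thesis using t1 unfolding qnrd_def by (elim disjE) linarith+
qed

definition qinv :: "rat \<Rightarrow> rat \<Rightarrow> quat \<Rightarrow> quat" where
  "qinv a b x = qscale (1 / qnrd a b x) (qconj x)"

lemma qinv_right: "qnrd a b x \<noteq> 0 \<Longrightarrow> qmul a b x (qinv a b x) = qone"
  by (simp add: qinv_def qmul_scale_right qmul_conj_right)

lemma qinv_left: "qnrd a b x \<noteq> 0 \<Longrightarrow> qmul a b (qinv a b x) x = qone"
  by (simp add: qinv_def qmul_scale_left qmul_conj_left)

lemma qnrd_zero_iff: "a < 0 \<Longrightarrow> b < 0 \<Longrightarrow> qnrd a b x = 0 \<longleftrightarrow> x = 0"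
  using qnrd_pos[of a b x] by (cases "x = 0") (auto simp: qnrd_def)

primrec qpow :: "rat \<Rightarrow> rat \<Rightarrow> quat \<Rightarrow> nat \<Rightarrow> quat" where
  "qpow a b x 0 = qone"
| "qpow a b x (Suc n) = qmul a b x (qpow a b x n)"

lemma qnrd_qpow: "qnrd a b (qpow a b x n) = qnrd a b x ^ n"
  by (induct n) (simp_all add: qnrd_mult)

lemma qpow_rec: "qpow a b x (Suc (Suc n)) = qscale (2 * q0 x) (qpow a b x (Suc n)) - qscale (qnrd a b x) (qpow a b x n)"
proof -
  have "qpow a b x (Suc (Suc n)) = qmul a b (qmul a b x x) (qpow a b x n)" by (simp add: qmul_assoc)
  also have "\<dots> = qscale (2 * q0 x) (qpow a b x (Suc n)) - qscale (qnrd a b x) (qpow a b x n)"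
    unfolding qmul_self by (simp add: qmul_diff_left qmul_scale_left)
  finally show ?thesis .
qed

lemma qconj_intertwiner_exists:
  assumes ab: "a < 0" "b < 0"
  shows "\<exists>w. w \<noteq> 0 \<and> qmul a b w u = qmul a b (qconj u) w"
proof (cases "q1 u = 0 \<and> q2 u = 0")
  case True
  show ?thesis
  proof (cases "q3 u = 0")
    case True
    then have "qconj u = u" using \<open>q1 u = 0 \<and> q2 u = 0\<close> by (intro quat_eqI) simp_all
    moreover have "qone \<noteq> 0" by (simp add: qone_def zero_quat_def)
    ultimately show ?thesis by (intro exI[of _ qone]) simp
  next
    case False
    have "qmul a b (Quat 0 1 0 0) u = qmul a b (qconj u) (Quat 0 1 0 0)"
      using True by (intro quat_eqI) simp_all
    then show ?thesis by (intro exI[of _ "Quat 0 1 0 0"]) (simp add: zero_quat_def)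
  qed
next
  case False
  define w where "w = Quat 0 (b * q2 u) (- a * q1 u) 0"
  have "w \<noteq> 0" using False ab unfolding w_def zero_quat_def by auto
  moreover have "qmul a b w u = qmul a b (qconj u) w"
    unfolding w_def by (intro quat_eqI) (simp_all add: algebra_simps)
  ultimately show ?thesis by blast
qed

lemma qconj_conj [simp]: "qconj (qconj u) = u"
  by (rule quat_eqI) simp_all

lemma qconj_zero_iff: "qconj u = 0 \<longleftrightarrow> u = 0"
proof
  assume "qconj u = 0"
  then have "qconj (qconj u) = qconj 0" by simp
  moreover have "qconj 0 = 0" by (rule quat_eqI) simp_all
  ultimately show "u = 0" by simp
qed (auto intro: quat_eqI)

lemma qscale_zero_iff: "r \<noteq> 0 \<Longrightarrow> qscale r x = 0 \<longleftrightarrow> x = 0"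
proof
  assume r: "r \<noteq> 0" and "qscale r x = 0"
  then have "qscale (1 / r) (qscale r x) = 0" by simp
  then show "x = 0" using r by simp
qed simp

lemma qmul_right_inj:
  assumes ab: "a < 0" "b < 0" and u: "u \<noteq> 0"
  shows "inj (\<lambda>y. qmul a b y u)"
proof (rule injI)
  fix x y assume "qmul a b x u = qmul a b y u"
  then have "qmul a b (qmul a b x u) (qinv a b u) = qmul a b (qmul a b y u) (qinv a b u)" by simp
  then show "x = y" using qinv_right[of a b u] qnrd_zero_iff[OF ab, of u] u by (simp add: qmul_assoc)
qed

lemma qunit_iff:
  assumes ab: "a < 0" "b < 0"
  shows "qunit a b x \<longleftrightarrow> x \<noteq> 0"
proof
  assume "qunit a b x"
  then obtain y where "qmul a b x y = qone" unfolding qunit_def by blast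
  moreover have "qone \<noteq> 0" by (simp add: qone_def zero_quat_def)
  ultimately show "x \<noteq> 0" by auto
next
  assume x: "x \<noteq> 0"
  have "qnrd a b x \<noteq> 0" using qnrd_pos[OF ab x] by simp
  then show "qunit a b x" unfolding qunit_def using qinv_left qinv_right by blast
qed

section \<open>The q-adic valuation on the rationals\<close>

definition pval :: "nat \<Rightarrow> rat \<Rightarrow> int" where
  "pval q r = int (multiplicity (int q) (fst (quotient_of r))) - int (multiplicity (int q) (snd (quotient_of r)))"

lemma pval_zero [simp]: "pval q 0 = 0"
  by (simp add: pval_def)

lemma pval_frac:
  assumes q: "prime q" and u: "u \<noteq> 0" and w: "w \<noteq> 0"
  shows "pval q (of_int u / of_int w) = int (multiplicity (int q) u) - int (multiplicity (int q) w)"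
proof -
  obtain u' w' where qo: "quotient_of (of_int u / of_int w) = (u', w')" by (cases "quotient_of (of_int u / of_int w)")
  have w'p: "w' > 0" using quotient_of_denom_pos[OF qo] .
  have eq: "(of_int u / of_int w :: rat) = of_int u' / of_int w'" using quotient_of_div[OF qo] .
  have u': "u' \<noteq> 0" using eq u w w'p by auto
  have "of_int (u' * w) = (of_int (u * w') :: rat)"
    using eq w w'p by (simp add: field_simps)
  then have cr: "u' * w = u * w'" by (simp only: of_int_eq_iff)
  have "multiplicity (int q) (u' * w) = multiplicity (int q) (u * w')" using cr by simp
  then have "multiplicity (int q) u' + multiplicity (int q) w = multiplicity (int q) u + multiplicity (int q) w'"
    using q u w u' w'p by (simp add: prime_elem_multiplicity_mult_distrib)
  then show ?thesis unfolding pval_def qo by simp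
qed

lemma pval_of_int: "prime q \<Longrightarrow> u \<noteq> 0 \<Longrightarrow> pval q (of_int u) = int (multiplicity (int q) u)"
  using pval_frac[of q u 1] by simp

lemma rat_as_frac: fixes r :: rat obtains u w where "r = of_int u / of_int w" "w > 0" "r \<noteq> 0 \<Longrightarrow> u \<noteq> 0"
proof -
  obtain u w where qo: "quotient_of r = (u, w)" by (cases "quotient_of r")
  show ?thesis using that[of u w] quotient_of_div[OF qo] quotient_of_denom_pos[OF qo] by auto
qed

lemma pval_mult:
  assumes q: "prime q" and r: "r \<noteq> 0" and s: "s \<noteq> 0"
  shows "pval q (r * s) = pval q r + pval q s"
proof -
  obtain u w where r': "r = of_int u / of_int w" "w > 0" "u \<noteq> 0" using rat_as_frac[of r] r by metis
  obtain u2 w2 where s': "s = of_int u2 / of_int w2" "w2 > 0" "u2 \<noteq> 0" using rat_as_frac[of s] s by metis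
  have "r * s = of_int (u * u2) / of_int (w * w2)" using r' s' by simp
  then show ?thesis using r' s' q
    by (simp add: pval_frac prime_elem_multiplicity_mult_distrib del: of_int_mult)
qed

lemma pval_inverse: "prime q \<Longrightarrow> r \<noteq> 0 \<Longrightarrow> pval q (inverse r) = - pval q r"
  using pval_mult[of q r "inverse r"] by (simp add: pval_def)

lemma pval_divide: "prime q \<Longrightarrow> r \<noteq> 0 \<Longrightarrow> s \<noteq> 0 \<Longrightarrow> pval q (r / s) = pval q r - pval q s"
  by (simp add: divide_inverse pval_mult pval_inverse)

lemma pval_power: "prime q \<Longrightarrow> pval q (r ^ k) = int k * pval q r"
proof (induct k)
  case (Suc k) then show ?case
    by (cases "r = 0") (simp_all add: pval_mult algebra_simps)
qed (simp add: pval_def)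

lemma pval_minus [simp]: "pval q (- r) = pval q r"
  by (simp add: pval_def rat_uminus_code split: prod.splits prod.split_sel)

lemma pval_one [simp]: "pval q 1 = 0"
  by (simp add: pval_def)

lemma pval_prime_self: "prime q \<Longrightarrow> pval q (of_nat q) = 1"
  using pval_of_int[of q "int q"] multiplicity_self[of "int q"] prime_gt_1_nat[of q] by simp

lemma zloc_iff_frac:
  assumes q: "prime q"
  shows "r \<in> zloc q \<longleftrightarrow> (\<exists>u w. \<not> int q dvd w \<and> r = of_int u / of_int w)"
proof
  assume "r \<in> zloc q"
  then show "\<exists>u w. \<not> int q dvd w \<and> r = of_int u / of_int w"
    unfolding zloc_def using quotient_of_div[of r "fst (quotient_of r)" "snd (quotient_of r)"] by auto
next
  assume "\<exists>u w. \<not> int q dvd w \<and> r = of_int u / of_int w"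
  then obtain u w where uw: "\<not> int q dvd w" "r = of_int u / of_int w" by blast
  have w0: "w \<noteq> 0" using uw(1) by auto
  obtain u' w' where qo: "quotient_of r = (u', w')" by (cases "quotient_of r")
  have w'p: "w' > 0" using quotient_of_denom_pos[OF qo] .
  have cop: "coprime u' w'" using quotient_of_coprime[OF qo] .
  have eq: "r = of_int u' / of_int w'" using quotient_of_div[OF qo] .
  have "of_int (u' * w) = (of_int (u * w') :: rat)"
    using eq uw w0 w'p by (simp add: field_simps)
  then have cr: "u' * w = u * w'" by (simp only: of_int_eq_iff)
  show "r \<in> zloc q"
  proof (rule ccontr)
    assume "r \<notin> zloc q"
    then have "int q dvd w'" by (simp add: zloc_def qo)
    then have "int q dvd u' * w" using cr by simp
    then have "int q dvd u'" using uw(1) q by (simp add: prime_dvd_mult_iff)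
    then show False using cop \<open>int q dvd w'\<close> q
      by (metis coprime_common_divisor not_prime_unit prime_nat_int_transfer)
  qed
qed

lemma zloc_int [simp]: "prime q \<Longrightarrow> of_int n \<in> zloc q"
  using prime_gt_1_nat[of q] by (simp add: zloc_def)

lemma zloc_nat [simp]: "prime q \<Longrightarrow> of_nat n \<in> zloc q"
  using zloc_int[of q "int n"] by simp

lemma zloc_0 [simp]: "prime q \<Longrightarrow> 0 \<in> zloc q" and zloc_1 [simp]: "prime q \<Longrightarrow> 1 \<in> zloc q"
  using zloc_int[of q 0] zloc_int[of q 1] by simp_all

lemma zloc_numeral [simp]: "prime q \<Longrightarrow> numeral n \<in> zloc q"
  using zloc_nat[of q "numeral n"] by simp

lemma zloc_add: assumes q: "prime q" and "r \<in> zloc q" "s \<in> zloc q" shows "r + s \<in> zloc q"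
proof -
  obtain u w u2 w2 where "\<not> int q dvd w" "r = of_int u / of_int w" "\<not> int q dvd w2" "s = of_int u2 / of_int w2"
    using assms zloc_iff_frac by metis
  moreover then have "w \<noteq> 0" "w2 \<noteq> 0" by auto
  ultimately have "r + s = of_int (u * w2 + u2 * w) / of_int (w * w2)" "\<not> int q dvd w * w2"
    using q by (simp_all add: field_simps prime_dvd_mult_iff)
  then show ?thesis using zloc_iff_frac[OF q] by blast
qed

lemma zloc_mult: assumes q: "prime q" and "r \<in> zloc q" "s \<in> zloc q" shows "r * s \<in> zloc q"
proof -
  obtain u w u2 w2 where "\<not> int q dvd w" "r = of_int u / of_int w" "\<not> int q dvd w2" "s = of_int u2 / of_int w2"
    using assms zloc_iff_frac by metis
  moreover then have "w \<noteq> 0" "w2 \<noteq> 0" by auto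
  ultimately have "r * s = of_int (u * u2) / of_int (w * w2)" "\<not> int q dvd w * w2"
    using q by (simp_all add: prime_dvd_mult_iff)
  then show ?thesis using zloc_iff_frac[OF q] by blast
qed

lemma zloc_minus: assumes q: "prime q" and "r \<in> zloc q" shows "- r \<in> zloc q"
  using zloc_mult[OF q zloc_int[OF q, of "-1"] assms(2)] by simp

lemma zloc_diff: "prime q \<Longrightarrow> r \<in> zloc q \<Longrightarrow> s \<in> zloc q \<Longrightarrow> r - s \<in> zloc q"
  using zloc_add[of q r "- s"] zloc_minus[of q s] by simp

lemma zloc_sum: "prime q \<Longrightarrow> (\<And>i. i \<in> A \<Longrightarrow> f i \<in> zloc q) \<Longrightarrow> sum f A \<in> zloc q"
  by (induct A rule: infinite_finite_induct) (simp_all add: zloc_add)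

lemma Ints_zloc: "prime q \<Longrightarrow> r \<in> \<int> \<Longrightarrow> r \<in> zloc q"
  by (auto elim!: Ints_cases)

lemma rat_denom_mult_Ints: "of_int (snd (quotient_of r)) * r \<in> \<int>"
proof -
  obtain u w where qo: "quotient_of r = (u, w)" by (cases "quotient_of r")
  have "r = of_int u / of_int w" "w > 0" using quotient_of_div[OF qo] quotient_of_denom_pos[OF qo] by auto
  then have "of_int w * r = of_int u" by simp
  then show ?thesis using qo by simp
qed

lemma zloc_iff_pval:
  assumes q: "prime q"
  shows "r \<in> zloc q \<longleftrightarrow> r = 0 \<or> pval q r \<ge> 0"
proof (cases "r = 0")
  case False
  obtain u w where qo: "quotient_of r = (u, w)" by (cases "quotient_of r")
  have w'p: "w > 0" using quotient_of_denom_pos[OF qo] .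
  have cop: "coprime u w" using quotient_of_coprime[OF qo] .
  have eq: "r = of_int u / of_int w" using quotient_of_div[OF qo] .
  have u0: "u \<noteq> 0" using eq False by auto
  have v: "pval q r = int (multiplicity (int q) u) - int (multiplicity (int q) w)"
    unfolding pval_def qo by simp
  show ?thesis
  proof (cases "int q dvd w")
    case True
    then have "\<not> int q dvd u" using cop q
      by (metis coprime_common_divisor not_prime_unit prime_nat_int_transfer)
    then have "multiplicity (int q) u = 0" by (simp add: not_dvd_imp_multiplicity_0)
    moreover have "multiplicity (int q) w > 0" using True w'p q
      by (subst multiplicity_gt_zero_iff) (auto simp: prime_gt_1_nat)
    ultimately show ?thesis using False True v by (simp add: zloc_def qo)
  next
    case False
    then have "multiplicity (int q) w = 0" by (simp add: not_dvd_imp_multiplicity_0)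
    then show ?thesis using False v by (simp add: zloc_def qo)
  qed
qed (simp add: q)

lemma pval_add_ge_min:
  assumes q: "prime q" and "r \<noteq> 0" "s \<noteq> 0" "r + s \<noteq> 0"
  shows "pval q (r + s) \<ge> min (pval q r) (pval q s)"
proof -
  define m where "m = min (pval q r) (pval q s)"
  define c where "c = (of_nat q :: rat) powi m"
  have qp: "q > 0" using q prime_gt_0_nat by blast
  have c0: "c \<noteq> 0" unfolding c_def using qp by simp
  have vc: "pval q c = m"
  proof (cases "m \<ge> 0")
    case True then show ?thesis unfolding c_def
      using pval_power[OF q, of "of_nat q" "nat m"] pval_prime_self[OF q] by (simp add: power_int_def)
  next
    case False then show ?thesis unfolding c_def
      using pval_power[OF q, of "inverse (of_nat q)" "nat (- m)"] pval_prime_self[OF q] pval_inverse[OF q, of "of_nat q"] qp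
      by (simp add: power_int_def power_inverse)
  qed
  have "r / c \<in> zloc q" "s / c \<in> zloc q"
    using assms c0 vc unfolding zloc_iff_pval[OF q] m_def by (simp_all add: pval_divide)
  then have "(r + s) / c \<in> zloc q" using zloc_add[OF q] by (simp add: add_divide_distrib)
  then have "pval q ((r + s) / c) \<ge> 0" using assms c0 unfolding zloc_iff_pval[OF q] by simp
  then show ?thesis using assms c0 vc by (simp add: pval_divide m_def)
qed

lemma pval_add_strict:
  assumes q: "prime q" and r: "r \<noteq> 0" and lt: "s = 0 \<or> pval q r < pval q s"
  shows "pval q (r + s) = pval q r" "r + s \<noteq> 0"
proof -
  show rs: "r + s \<noteq> 0"
  proof
    assume "r + s = 0" then have "s = - r" by simp
    then show False using lt r by auto
  qed
  show "pval q (r + s) = pval q r"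
  proof (cases "s = 0")
    case False
    have "pval q (r + s) \<ge> min (pval q r) (pval q s)" using pval_add_ge_min[OF q r False rs] .
    moreover have "pval q ((r + s) + (- s)) \<ge> min (pval q (r + s)) (pval q (- s))"
      using pval_add_ge_min[OF q rs, of "- s"] False r by simp
    ultimately show ?thesis using lt False by simp
  qed simp
qed

lemma Ints_if_zloc_all:
  assumes "\<And>q. prime q \<Longrightarrow> r \<in> zloc q"
  shows "r \<in> \<int>"
proof -
  obtain u w where qo: "quotient_of r = (u, w)" by (cases "quotient_of r")
  have wp: "w > 0" using quotient_of_denom_pos[OF qo] .
  have eq: "r = of_int u / of_int w" using quotient_of_div[OF qo] .
  have "w = 1"
  proof (rule ccontr)
    assume "w \<noteq> 1"
    then have "nat w \<noteq> 1" using wp by simp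
    then obtain q where "prime q" "q dvd nat w" using prime_factor_nat by blast
    then have "int q dvd int (nat w)" by (simp only: int_dvd_int_iff)
    then have "int q dvd w" using wp by simp
    then show False using assms[OF \<open>prime q\<close>] by (simp add: zloc_def qo)
  qed
  then show ?thesis using eq by simp
qed

lemma rat_eq_if_pval_eq:
  assumes r: "r > 0" and s: "s > 0" and v: "\<And>q. prime q \<Longrightarrow> pval q r = pval q s"
  shows "r = s"
proof -
  have "r / s \<in> \<int>"
    using v r s by (intro Ints_if_zloc_all) (simp add: zloc_iff_pval pval_divide)
  moreover have "s / r \<in> \<int>"
    using v r s by (intro Ints_if_zloc_all) (simp add: zloc_iff_pval pval_divide)
  ultimately obtain m n where mn: "r / s = of_int m" "s / r = of_int n" by (auto elim!: Ints_cases)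
  have "of_int (m * n) = (r / s) * (s / r)" using mn by simp
  also have "\<dots> = 1" using r s by simp
  finally have "m * n = 1" by (simp only: of_int_eq_1_iff)
  moreover have "m > 0" using mn r s
    by (metis divide_pos_pos of_int_0_less_iff)
  ultimately have "m = 1" using pos_zmult_eq_1_iff by blast
  then show ?thesis using mn(1) s by simp
qed

lemma zloc_inverse_int:
  assumes q: "prime q" and "\<not> int q dvd s"
  shows "1 / of_int s \<in> zloc q"
proof -
  have "1 / of_int s = (of_int 1 :: rat) / of_int s" by simp
  then show ?thesis using zloc_iff_frac[OF q] assms(2) by blast
qed

lemma pval_of_int_coprime:
  assumes q: "prime q" and "\<not> int q dvd s"
  shows "pval q (of_int s) = 0"
  using assms by (subst pval_of_int) (auto simp: not_dvd_imp_multiplicity_0)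

lemma pval_nonneg_zloc: "prime q \<Longrightarrow> r \<in> zloc q \<Longrightarrow> r \<noteq> 0 \<Longrightarrow> pval q r \<ge> 0"
  using zloc_iff_pval by blast

lemma pval_of_nat_coprime: "prime q \<Longrightarrow> \<not> q dvd n \<Longrightarrow> pval q (of_nat n) = 0"
  using pval_of_int_coprime[of q "int n"] by (simp add: int_dvd_int_iff)

lemma zloc_from_powers:
  assumes q: "prime q" and C: "C \<noteq> 0" and h: "\<And>k. C * r ^ k \<in> zloc q"
  shows "r \<in> zloc q"
proof (rule ccontr)
  assume "r \<notin> zloc q"
  then have r: "r \<noteq> 0" "pval q r < 0" using zloc_iff_pval[OF q] by auto
  define k where "k = nat \<bar>pval q C\<bar> + 1"
  have k: "int k = \<bar>pval q C\<bar> + 1" unfolding k_def by simp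
  have "int k * pval q r \<le> - int k" using mult_left_mono[of "pval q r" "- 1" "int k"] r(2) by simp
  then have "pval q (C * r ^ k) < 0" using q C r k by (simp add: pval_mult pval_power)
  moreover have "C * r ^ k \<noteq> 0" using C r by simp
  ultimately show False using h[of k] zloc_iff_pval[OF q] by simp
qed

text \<open>The traces of the powers of an element with trace t and norm n satisfy this recurrence; if
  t is not q-integral, the valuations of the traces decrease linearly.\<close>

lemma pval_trace_recurrence:
  assumes q: "prime q" and t: "t \<noteq> 0" "pval q t < 0" and n: "n \<in> zloc q"
    and p0: "p 0 = 2" and p1: "p 1 = t" and rec: "\<And>k. p (Suc (Suc k)) = t * p (Suc k) - n * p k"
  shows "p (Suc k) \<noteq> 0 \<and> pval q (p (Suc k)) = int (Suc k) * pval q t"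
proof -
  have "(p k = 0 \<or> int k * pval q t \<le> pval q (p k)) \<and>
      p (Suc k) \<noteq> 0 \<and> pval q (p (Suc k)) = int (Suc k) * pval q t" for k
  proof (induct k)
    case 0
    have "pval q 2 \<ge> 0" using zloc_iff_pval[OF q, of 2] q by simp
    then show ?case using p0 p1 t by simp
  next
    case (Suc k)
    define r where "r = t * p (Suc k)"
    define s where "s = - n * p k"
    have r: "r \<noteq> 0" "pval q r = int (Suc (Suc k)) * pval q t"
      using Suc t q by (simp_all add: r_def pval_mult algebra_simps)
    have "s = 0 \<or> int k * pval q t \<le> pval q s"
    proof (cases "n = 0 \<or> p k = 0")
      case False
      then have "pval q n \<ge> 0" using n zloc_iff_pval[OF q] by auto
      then show ?thesis using Suc False q by (simp add: s_def pval_mult)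
    qed (auto simp: s_def)
    then have "s = 0 \<or> pval q r < pval q s" using r(2) t(2) by (auto simp: algebra_simps)
    moreover have "p (Suc (Suc k)) = r + s" by (simp add: rec r_def s_def)
    ultimately have "p (Suc (Suc k)) \<noteq> 0 \<and> pval q (p (Suc (Suc k))) = int (Suc (Suc k)) * pval q t"
      using pval_add_strict[OF q r(1), of s] r(2) by simp
    then show ?case using Suc by simp
  qed
  then show ?thesis by blast
qed

section \<open>Lattices and their localisations\<close>

definition qbasis :: "(nat \<Rightarrow> quat) \<Rightarrow> bool" where
  "qbasis v \<longleftrightarrow> (\<forall>c :: nat \<Rightarrow> rat. (\<Sum>i<4. qscale (c i) (v i)) = 0 \<longrightarrow> (\<forall>i<4. c i = 0))"

definition lat :: "(nat \<Rightarrow> quat) \<Rightarrow> quat set" where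
  "lat v = {(\<Sum>i<4. qscale (of_int (n i)) (v i)) | n :: nat \<Rightarrow> int. True}"

definition lat_loc :: "nat \<Rightarrow> (nat \<Rightarrow> quat) \<Rightarrow> quat set" where
  "lat_loc q v = {(\<Sum>i<4. qscale (c i) (v i)) | c. \<forall>i<4. c i \<in> zloc q}"

lemma is_lattice_iff: "is_lattice L \<longleftrightarrow> (\<exists>v. qbasis v \<and> L = lat v)"
  unfolding is_lattice_def qbasis_def lat_def by simp

interpretation QV: vector_space qscale
  by unfold_locales (simp_all add: qscale_add_right qscale_add_left)

definition "qstd_basis = {Quat 1 0 0 0, Quat 0 1 0 0, Quat 0 0 1 0, Quat 0 0 0 1}"

lemma qstd_basis_sum: "(\<Sum>x\<in>qstd_basis. qscale (f x) x) = Quat (f (Quat 1 0 0 0)) (f (Quat 0 1 0 0)) (f (Quat 0 0 1 0)) (f (Quat 0 0 0 1))"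
  by (rule quat_eqI) (simp_all add: qstd_basis_def)

interpretation QF: finite_dimensional_vector_space qscale qstd_basis
proof unfold_locales
  show "finite qstd_basis" by (simp add: qstd_basis_def)
  show "QV.independent qstd_basis"
  proof (rule QV.independent_if_scalars_zero)
    fix f x assume "(\<Sum>x\<in>qstd_basis. qscale (f x) x) = 0" "x \<in> qstd_basis"
    then show "f x = 0" unfolding qstd_basis_sum by (auto simp: qstd_basis_def zero_quat_def)
  qed (simp add: qstd_basis_def)
  show "QV.span qstd_basis = UNIV"
  proof -
    have "h \<in> range (\<lambda>u. \<Sum>v\<in>qstd_basis. qscale (u v) v)" for h
    proof
      define f where "f = (\<lambda>x. if x = Quat 1 0 0 0 then q0 h else if x = Quat 0 1 0 0 then q1 h
          else if x = Quat 0 0 1 0 then q2 h else q3 h)"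
      show "h = (\<Sum>v\<in>qstd_basis. qscale (f v) v)" unfolding qstd_basis_sum by (rule quat_eqI) (simp_all add: f_def)
    qed simp
    then show ?thesis by (auto simp: QV.span_finite qstd_basis_def)
  qed
qed

lemma card_qstd_basis: "card qstd_basis = 4"
  by (simp add: qstd_basis_def)

lemma qbasis_inj: assumes "qbasis v" shows "inj_on v {..<4}"
proof (rule inj_onI, rule ccontr)
  fix i j assume ij: "i \<in> {..<4}" "j \<in> {..<4}" "v i = v j" "i \<noteq> j"
  define c where "c = (\<lambda>k. if k = i then (1::rat) else if k = j then -1 else 0)"
  have "(\<Sum>k<4. qscale (c k) (v k)) = (\<Sum>k<4. (if k = i then v i else 0) + (if k = j then - v j else 0))"
    by (rule sum.cong) (auto simp: c_def qscale_minus_left ij)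
  also have "\<dots> = 0" using ij by (simp add: sum.distrib)
  finally have "c i = 0" using assms ij unfolding qbasis_def by blast
  then show False by (simp add: c_def)
qed

lemma sum_reindex_basis:
  assumes "inj_on v {..<4}"
  shows "(\<Sum>x\<in>v ` {..<4}. g x) = (\<Sum>i<4. g (v i))"
  using sum.reindex[OF assms] by simp

lemma qbasis_spans:
  assumes "qbasis v"
  shows "\<exists>c. h = (\<Sum>i<4. qscale (c i) (v i))"
proof -
  have inj: "inj_on v {..<4}" using qbasis_inj[OF assms] .
  have ind: "QV.independent (v ` {..<4})"
  proof (rule QV.independent_if_scalars_zero)
    fix f x assume s: "(\<Sum>x\<in>v ` {..<4}. qscale (f x) x) = 0" and x: "x \<in> v ` {..<4}"
    then have "(\<Sum>i<4. qscale (f (v i)) (v i)) = 0" using sum_reindex_basis[OF inj, of "\<lambda>x. qscale (f x) x"] by simp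
    then have "\<forall>i<4. f (v i) = 0" using assms[unfolded qbasis_def, THEN spec[of _ "\<lambda>i. f (v i)"]] by simp
    then show "f x = 0" using x by auto
  qed simp
  have "card (v ` {..<4}) = 4" using card_image[OF inj] by simp
  then have "UNIV \<subseteq> QV.span (v ` {..<4})"
    using QF.card_eq_dim[of "v ` {..<4}" UNIV] ind by (simp add: card_qstd_basis)
  then have "h \<in> range (\<lambda>u. \<Sum>x\<in>v ` {..<4}. qscale (u x) x)"
    using QV.span_finite[of "v ` {..<4}"] by auto
  then obtain u where "h = (\<Sum>x\<in>v ` {..<4}. qscale (u x) x)" by blast
  then have "h = (\<Sum>i<4. qscale (u (v i)) (v i))" using sum_reindex_basis[OF inj] by simp
  then show ?thesis by (intro exI[of _ "\<lambda>i. u (v i)"])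
qed

lemma sum4_combine:
  "(\<Sum>i<4. qscale (c i) (v i)) - (\<Sum>i<4. qscale (d i) (v i)) = (\<Sum>i<4. qscale (c i - d i) (v i))"
  by (simp add: sum_subtractf[symmetric] qscale_diff_left)

lemma sum4_add:
  "(\<Sum>i<4. qscale (c i) (v i)) + (\<Sum>i<4. qscale (d i) (v i)) = (\<Sum>i<4. qscale (c i + d i) (v i))"
  by (simp add: sum.distrib[symmetric] qscale_add_left)

lemma sum4_scale:
  "qscale r (\<Sum>i<4. qscale (c i) (v i)) = (\<Sum>i<4. qscale (r * c i) (v i))"
  by (simp add: qscale_sum_right)

lemma qbasis_coeff_unique:
  assumes "qbasis v" "(\<Sum>i<4. qscale (c i) (v i)) = (\<Sum>i<4. qscale (d i) (v i))" "i < 4"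
  shows "c i = d i"
proof -
  have "(\<Sum>i<4. qscale (c i - d i) (v i)) = 0" using assms(2) sum4_combine[of c v d] by simp
  then show ?thesis using assms(1,3) unfolding qbasis_def by fastforce
qed

lemma qbasis_nonzero: "qbasis v \<Longrightarrow> i < 4 \<Longrightarrow> v i \<noteq> 0"
proof
  assume v: "qbasis v" and i: "i < 4" and z: "v i = 0"
  define c where "c = (\<lambda>k. if k = i then (1::rat) else 0)"
  have "(\<Sum>k<4. qscale (c k) (v k)) = (\<Sum>k<4. if k = i then v i else 0)"
    by (rule sum.cong) (auto simp: c_def)
  also have "\<dots> = 0" using z by simp
  finally have "c i = 0" using v i unfolding qbasis_def by blast
  then show False by (simp add: c_def)
qed

lemma lat_mem: "x \<in> lat v \<longleftrightarrow> (\<exists>n. x = (\<Sum>i<4. qscale (of_int (n i)) (v i)))"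
  by (auto simp: lat_def)

lemma lat_loc_mem: "x \<in> lat_loc q v \<longleftrightarrow> (\<exists>c. (\<forall>i<4. c i \<in> zloc q) \<and> x = (\<Sum>i<4. qscale (c i) (v i)))"
  by (auto simp: lat_loc_def)

lemma lat_add: assumes "x \<in> lat v" "y \<in> lat v" shows "x + y \<in> lat v"
proof -
  obtain n n' where "x = (\<Sum>i<4. qscale (of_int (n i)) (v i))" "y = (\<Sum>i<4. qscale (of_int (n' i)) (v i))"
    using assms unfolding lat_mem by blast
  then have "x + y = (\<Sum>i<4. qscale (of_int (n i + n' i)) (v i))" by (simp add: sum4_add)
  then show ?thesis unfolding lat_mem by (intro exI[of _ "\<lambda>i. n i + n' i"])
qed

lemma lat_scale_int: assumes "x \<in> lat v" shows "qscale (of_int m) x \<in> lat v"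
proof -
  obtain n where "x = (\<Sum>i<4. qscale (of_int (n i)) (v i))"
    using assms unfolding lat_mem by blast
  then have "qscale (of_int m) x = (\<Sum>i<4. qscale (of_int (m * n i)) (v i))" by (simp add: sum4_scale)
  then show ?thesis unfolding lat_mem by (intro exI[of _ "\<lambda>i. m * n i"])
qed

lemma lat_minus: "x \<in> lat v \<Longrightarrow> - x \<in> lat v"
  using lat_scale_int[of x v "-1"] by (simp add: qscale_minus_left)

lemma lat_diff: "x \<in> lat v \<Longrightarrow> y \<in> lat v \<Longrightarrow> x - y \<in> lat v"
  using lat_add[of x v "- y"] lat_minus[of y v] by simp

lemma lat_zero: "0 \<in> lat v"
  using lat_mem[of 0 v] by (auto intro: exI[of _ "\<lambda>i. 0"])

lemma lat_sum: "(\<And>i. i \<in> A \<Longrightarrow> f i \<in> lat v) \<Longrightarrow> sum f A \<in> lat v"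
  by (induct A rule: infinite_finite_induct) (simp_all add: lat_zero lat_add)

lemma lat_basis: "i < 4 \<Longrightarrow> v i \<in> lat v"
proof -
  assume i: "i < 4"
  have "(\<Sum>j<4. qscale (of_int (if j = i then 1 else 0)) (v j)) = (\<Sum>j<4. if j = i then v j else 0)"
    by (rule sum.cong) auto
  also have "\<dots> = v i" using i by simp
  finally show ?thesis unfolding lat_mem by metis
qed

lemma lat_loc_add: assumes q: "prime q" and "x \<in> lat_loc q v" "y \<in> lat_loc q v" shows "x + y \<in> lat_loc q v"
proof -
  obtain c where "\<forall>i<4. c i \<in> zloc q" "x = (\<Sum>i<4. qscale (c i) (v i))"
    using assms(2) unfolding lat_loc_mem by blast
  moreover obtain c' where "\<forall>i<4. c' i \<in> zloc q" "y = (\<Sum>i<4. qscale (c' i) (v i))"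
    using assms(3) unfolding lat_loc_mem by blast
  ultimately have "x + y = (\<Sum>i<4. qscale (c i + c' i) (v i))" "\<forall>i<4. c i + c' i \<in> zloc q"
    by (simp_all add: sum4_add zloc_add[OF q])
  then show ?thesis unfolding lat_loc_mem by (intro exI[of _ "\<lambda>i. c i + c' i"]) simp
qed

lemma lat_loc_scale: assumes q: "prime q" and r: "r \<in> zloc q" and "x \<in> lat_loc q v" shows "qscale r x \<in> lat_loc q v"
proof -
  obtain c where "\<forall>i<4. c i \<in> zloc q" "x = (\<Sum>i<4. qscale (c i) (v i))"
    using assms unfolding lat_loc_mem by blast
  then have "qscale r x = (\<Sum>i<4. qscale (r * c i) (v i))" "\<forall>i<4. r * c i \<in> zloc q"
    by (simp_all add: sum4_scale zloc_mult[OF q r])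
  then show ?thesis unfolding lat_loc_mem by (intro exI[of _ "\<lambda>i. r * c i"]) simp
qed

lemma lat_loc_minus: "prime q \<Longrightarrow> x \<in> lat_loc q v \<Longrightarrow> - x \<in> lat_loc q v"
  using lat_loc_scale[of q "-1" x v] by (simp add: qscale_minus_left zloc_minus)

lemma lat_loc_diff: "prime q \<Longrightarrow> x \<in> lat_loc q v \<Longrightarrow> y \<in> lat_loc q v \<Longrightarrow> x - y \<in> lat_loc q v"
  using lat_loc_add[of q x v "- y"] lat_loc_minus[of q y v] by simp

lemma lat_subset_lat_loc: assumes q: "prime q" and "x \<in> lat v" shows "x \<in> lat_loc q v"
proof -
  obtain n where "x = (\<Sum>i<4. qscale (of_int (n i)) (v i))"
    using assms unfolding lat_mem by blast
  moreover have "\<forall>i<4. (of_int (n i) :: rat) \<in> zloc q" using q by simp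
  ultimately show ?thesis unfolding lat_loc_mem by (intro exI[of _ "\<lambda>i. of_int (n i)"]) simp
qed

lemma lat_loc_zero: "prime q \<Longrightarrow> 0 \<in> lat_loc q v"
  using lat_subset_lat_loc lat_zero by blast

lemma lat_loc_sum: "prime q \<Longrightarrow> (\<And>i. i \<in> A \<Longrightarrow> f i \<in> lat_loc q v) \<Longrightarrow> sum f A \<in> lat_loc q v"
  by (induct A rule: infinite_finite_induct) (simp_all add: lat_loc_zero lat_loc_add)

lemma loc_span_lat:
  assumes q: "prime q" and v: "qbasis v"
  shows "loc_span q (lat v) = lat_loc q v"
proof
  show "loc_span q (lat v) \<subseteq> lat_loc q v"
  proof
    fix x assume "x \<in> loc_span q (lat v)"
    then obtain F c where x: "x = (\<Sum>f\<in>F. qscale (c f) f)" "F \<subseteq> lat v" "\<forall>f\<in>F. c f \<in> zloc q"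
      unfolding loc_span_def by blast
    show "x \<in> lat_loc q v" unfolding x(1)
      using x(2,3) by (intro lat_loc_sum[OF q] lat_loc_scale[OF q] lat_subset_lat_loc[OF q]) auto
  qed
next
  show "lat_loc q v \<subseteq> loc_span q (lat v)"
  proof
    fix x assume "x \<in> lat_loc q v"
    then obtain c where c: "\<forall>i<4. c i \<in> zloc q" "x = (\<Sum>i<4. qscale (c i) (v i))" unfolding lat_loc_mem by blast
    have inj: "inj_on v {..<4}" using qbasis_inj[OF v] .
    define c' where "c' = (\<lambda>y. c (the_inv_into {..<4} v y))"
    have "(\<Sum>y\<in>v ` {..<4}. qscale (c' y) y) = (\<Sum>i<4. qscale (c' (v i)) (v i))"
      using sum_reindex_basis[OF inj] .
    also have "\<dots> = x" unfolding c(2) c'_def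
      by (rule sum.cong) (auto simp: the_inv_into_f_f[OF inj])
    finally have "x = (\<Sum>y\<in>v ` {..<4}. qscale (c' y) y)" by simp
    moreover have "\<forall>y\<in>v ` {..<4}. c' y \<in> zloc q"
      using c(1) by (auto simp: c'_def the_inv_into_f_f[OF inj])
    moreover have "v ` {..<4} \<subseteq> lat v" using lat_basis by auto
    ultimately show "x \<in> loc_span q (lat v)" unfolding loc_span_def
      by (intro CollectI exI[of _ "v ` {..<4}"] exI[of _ c']) simp
  qed
qed

lemma sum4_int_lat:
  assumes "\<forall>i<4. d i \<in> \<int>"
  shows "(\<Sum>i<4. qscale (d i) (v i)) \<in> lat v"
proof -
  have "\<forall>i. \<exists>m. i < 4 \<longrightarrow> d i = of_int m" using assms by (metis Ints_cases)
  then obtain n where n: "\<forall>i<4. d i = of_int (n i)" by metis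
  have "(\<Sum>i<4. qscale (d i) (v i)) = (\<Sum>i<4. qscale (of_int (n i)) (v i))" by (rule sum.cong) (auto simp: n)
  then show ?thesis unfolding lat_mem by (intro exI[of _ n])
qed

lemma lat_local_global:
  assumes v: "qbasis v" and h: "\<And>q. prime q \<Longrightarrow> h \<in> lat_loc q v"
  shows "h \<in> lat v"
proof -
  obtain c where c: "h = (\<Sum>i<4. qscale (c i) (v i))" using qbasis_spans[OF v] by blast
  have "c i \<in> zloc q" if "prime q" "i < 4" for q i
  proof -
    have "h \<in> lat_loc q v" using h that(1) by blast
    then obtain d where d: "\<forall>i<4. d i \<in> zloc q" "h = (\<Sum>i<4. qscale (d i) (v i))"
      unfolding lat_loc_mem by blast
    have "c i = d i" using qbasis_coeff_unique[OF v _ that(2), of c d] c d(2) by simp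
    then show ?thesis using d(1) that(2) by simp
  qed
  then have "\<forall>i<4. c i \<in> \<int>" using Ints_if_zloc_all by blast
  then show ?thesis unfolding c by (rule sum4_int_lat)
qed

lemma clear_denoms:
  fixes c :: "nat \<Rightarrow> rat"
  shows "\<exists>s::int. s > 0 \<and> (\<forall>i<n. of_int s * c i \<in> \<int>) \<and>
    (\<forall>q. prime q \<longrightarrow> (\<forall>i<n. c i \<in> zloc q) \<longrightarrow> \<not> int q dvd s)"
proof (induct n)
  case 0 then show ?case by (auto intro!: exI[of _ 1] simp: prime_gt_1_nat)
next
  case (Suc n)
  then obtain s where s: "s > 0" "\<forall>i<n. of_int s * c i \<in> \<int>"
    "\<forall>q. prime q \<longrightarrow> (\<forall>i<n. c i \<in> zloc q) \<longrightarrow> \<not> int q dvd s" by blast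
  define w where "w = snd (quotient_of (c n))"
  have wp: "w > 0" unfolding w_def using quotient_of_denom_pos' .
  have cw: "of_int w * c n \<in> \<int>"
  proof -
    obtain u w' where qo: "quotient_of (c n) = (u, w')" by (cases "quotient_of (c n)")
    have "c n = of_int u / of_int w'" using quotient_of_div[OF qo] .
    moreover have "w = w'" unfolding w_def qo by simp
    ultimately have "of_int w * c n = of_int u" using wp by simp
    then show ?thesis by simp
  qed
  have "of_int (s * w) * c i \<in> \<int>" if "i < Suc n" for i
  proof (cases "i = n")
    case True
    have "of_int (s * w) * c i = of_int s * (of_int w * c n)" using True by (simp add: mult.assoc)
    then show ?thesis using cw Ints_mult Ints_of_int by metis
  next
    case False
    then have "i < n" using that by simp
    have "of_int (s * w) * c i = of_int w * (of_int s * c i)" by (simp add: mult.assoc mult.left_commute)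
    then show ?thesis using s(2) \<open>i < n\<close> Ints_mult Ints_of_int by metis
  qed
  moreover have "\<not> int q dvd s * w" if "prime q" "\<forall>i<Suc n. c i \<in> zloc q" for q
  proof -
    have "\<not> int q dvd s" using s(3) that by simp
    moreover have "\<not> int q dvd w" using that(2) unfolding w_def zloc_def by simp
    ultimately show ?thesis using that(1) by (simp add: prime_dvd_mult_iff)
  qed
  ultimately show ?case using s(1) wp by (intro exI[of _ "s * w"]) simp
qed

lemma lat_loc_clear_denom:
  assumes q: "prime q" and h: "h \<in> lat_loc q v"
  shows "\<exists>s::int. s > 0 \<and> \<not> int q dvd s \<and> qscale (of_int s) h \<in> lat v"
proof -
  obtain c where c: "\<forall>i<4. c i \<in> zloc q" "h = (\<Sum>i<4. qscale (c i) (v i))" using h unfolding lat_loc_mem by blast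
  obtain s :: int where s: "s > 0" "\<forall>i<4. of_int s * c i \<in> \<int>"
    "\<forall>q. prime q \<longrightarrow> (\<forall>i<4. c i \<in> zloc q) \<longrightarrow> \<not> int q dvd s"
    using clear_denoms[of 4 c] by blast
  have "qscale (of_int s) h = (\<Sum>i<4. qscale (of_int s * c i) (v i))" unfolding c(2) by (simp add: sum4_scale)
  then show ?thesis using s q c(1) sum4_int_lat[of "\<lambda>i. of_int s * c i" v] by (intro exI[of _ s]) auto
qed

lemma lat_loc_mono:
  assumes q: "prime q" and sub: "lat v' \<subseteq> lat v"
  shows "lat_loc q v' \<subseteq> lat_loc q v"
proof
  fix h assume "h \<in> lat_loc q v'"
  then obtain c where c: "\<forall>i<4. c i \<in> zloc q" "h = (\<Sum>i<4. qscale (c i) (v' i))" unfolding lat_loc_mem by blast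
  have "v' i \<in> lat_loc q v" if "i < 4" for i using sub lat_basis[OF that, of v'] lat_subset_lat_loc[OF q] by blast
  then show "h \<in> lat_loc q v" unfolding c(2) using c(1) by (intro lat_loc_sum[OF q] lat_loc_scale[OF q]) auto
qed

lemma lat_loc_clear_denoms:
  fixes h v :: "nat \<Rightarrow> quat"
  assumes q: "prime q" and h: "\<forall>i<n. h i \<in> lat_loc q v"
  shows "\<exists>t::nat. t > 0 \<and> \<not> q dvd t \<and> (\<forall>i<n. qscale (of_nat t) (h i) \<in> lat v)"
  using h
proof (induct n)
  case 0 then show ?case using q prime_gt_1_nat[OF q] by (intro exI[of _ 1]) simp
next
  case (Suc n)
  then obtain t :: nat where t: "t > 0" "\<not> q dvd t" "\<forall>i<n. qscale (of_nat t) (h i) \<in> lat v" by auto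
  obtain s :: int where s: "s > 0" "\<not> int q dvd s" "qscale (of_int s) (h n) \<in> lat v"
    using lat_loc_clear_denom[OF q, of "h n" v] Suc.prems by auto
  define t' where "t' = t * nat s"
  have t'pos: "t' > 0" unfolding t'_def using t s by simp
  have "\<not> q dvd nat s" using s by (metis int_dvd_int_iff int_nat_eq less_imp_le)
  then have t'q: "\<not> q dvd t'" unfolding t'_def using t(2) q by (simp add: prime_dvd_mult_iff)
  have "qscale (of_nat t') (h i) \<in> lat v" if i: "i < Suc n" for i
  proof (cases "i = n")
    case True
    have "qscale (of_nat t') (h i) = qscale (of_int (int t)) (qscale (of_int s) (h n))"
      unfolding t'_def True using s(1) by (simp add: mult.commute)
    then show ?thesis using lat_scale_int[OF s(3), of "int t"] by (simp only:)
  next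
    case False
    then have "i < n" using i by simp
    have "qscale (of_nat t') (h i) = qscale (of_int s) (qscale (of_nat t) (h i))"
      unfolding t'_def using s(1) by (simp add: mult.commute)
    then show ?thesis using lat_scale_int[OF t(3)[rule_format, OF \<open>i < n\<close>], of s] by (simp only:)
  qed
  then show ?case using t'pos t'q by blast
qed

lemma qbasis_clear_denom:
  assumes v: "qbasis v"
  shows "\<exists>s::int. s > 0 \<and> qscale (of_int s) h \<in> lat v"
proof -
  obtain c where c: "h = (\<Sum>i<4. qscale (c i) (v i))" using qbasis_spans[OF v] by blast
  obtain s :: int where s: "s > 0" "\<forall>i<4. of_int s * c i \<in> \<int>"
    using clear_denoms[of 4 c] by blast
  have "qscale (of_int s) h = (\<Sum>i<4. qscale (of_int s * c i) (v i))" unfolding c by (simp add: sum4_scale)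
  then show ?thesis using s sum4_int_lat[of "\<lambda>i. of_int s * c i" v] by (intro exI[of _ s]) auto
qed

lemma lat_loc_linear_bounded:
  fixes f :: "quat \<Rightarrow> rat" and v :: "nat \<Rightarrow> quat"
  assumes add: "\<And>x y. f (x + y) = f x + f y" and scale: "\<And>r x. f (qscale r x) = r * f x"
  obtains D :: int where "D > 0" "\<And>q w. prime q \<Longrightarrow> w \<in> lat_loc q v \<Longrightarrow> of_int D * f w \<in> zloc q"
proof -
  obtain D :: int where D: "D > 0" "\<forall>i<4. of_int D * f (v i) \<in> \<int>"
    using clear_denoms[of 4 "\<lambda>i. f (v i)"] by blast
  have f_sum: "f (sum g A) = (\<Sum>x\<in>A. f (g x))" for g and A :: "nat set"
    by (induct A rule: infinite_finite_induct) (simp_all add: add scale[of 0, simplified])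
  have "of_int D * f w \<in> zloc q" if q: "prime q" and w: "w \<in> lat_loc q v" for q w
  proof -
    obtain c where c: "\<forall>i<4. c i \<in> zloc q" "w = (\<Sum>i<4. qscale (c i) (v i))"
      using w unfolding lat_loc_mem by blast
    have "of_int D * f w = (\<Sum>i<4. c i * (of_int D * f (v i)))"
      unfolding c(2) f_sum scale by (simp add: sum_distrib_left mult_ac)
    also have "\<dots> \<in> zloc q"
      using c(1) D(2) Ints_zloc[OF q] zloc_mult[OF q] by (intro zloc_sum[OF q]) auto
    finally show ?thesis .
  qed
  then show ?thesis using that D(1) by blast
qed

lemma lat_loc_bounded_denoms:
  fixes v :: "nat \<Rightarrow> quat"
  obtains D :: int where "D > 0" "\<And>q w. prime q \<Longrightarrow> w \<in> lat_loc q v \<Longrightarrow>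
    of_int D * q0 w \<in> zloc q \<and> of_int D * q1 w \<in> zloc q \<and> of_int D * q2 w \<in> zloc q \<and> of_int D * q3 w \<in> zloc q"
proof -
  obtain D0 :: int where D0: "D0 > 0" "\<And>q w. prime q \<Longrightarrow> w \<in> lat_loc q v \<Longrightarrow> of_int D0 * q0 w \<in> zloc q"
    by (rule lat_loc_linear_bounded[of q0 v]) simp_all
  obtain D1 :: int where D1: "D1 > 0" "\<And>q w. prime q \<Longrightarrow> w \<in> lat_loc q v \<Longrightarrow> of_int D1 * q1 w \<in> zloc q"
    by (rule lat_loc_linear_bounded[of q1 v]) simp_all
  obtain D2 :: int where D2: "D2 > 0" "\<And>q w. prime q \<Longrightarrow> w \<in> lat_loc q v \<Longrightarrow> of_int D2 * q2 w \<in> zloc q"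
    by (rule lat_loc_linear_bounded[of q2 v]) simp_all
  obtain D3 :: int where D3: "D3 > 0" "\<And>q w. prime q \<Longrightarrow> w \<in> lat_loc q v \<Longrightarrow> of_int D3 * q3 w \<in> zloc q"
    by (rule lat_loc_linear_bounded[of q3 v]) simp_all
  have "of_int (D0 * D1 * D2 * D3) * q0 w \<in> zloc q \<and> of_int (D0 * D1 * D2 * D3) * q1 w \<in> zloc q \<and>
      of_int (D0 * D1 * D2 * D3) * q2 w \<in> zloc q \<and> of_int (D0 * D1 * D2 * D3) * q3 w \<in> zloc q"
    if q: "prime q" and w: "w \<in> lat_loc q v" for q w
    using zloc_mult[OF q zloc_int[OF q, of "D1 * D2 * D3"] D0(2)[OF q w]]
      zloc_mult[OF q zloc_int[OF q, of "D0 * D2 * D3"] D1(2)[OF q w]]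
      zloc_mult[OF q zloc_int[OF q, of "D0 * D1 * D3"] D2(2)[OF q w]]
      zloc_mult[OF q zloc_int[OF q, of "D0 * D1 * D2"] D3(2)[OF q w]]
    by (simp_all add: mult_ac)
  then show ?thesis using that[of "D0 * D1 * D2 * D3"] D0(1) D1(1) D2(1) D3(1) by simp
qed

lemma qnrd_lat_loc_bounded:
  fixes v :: "nat \<Rightarrow> quat"
  obtains C :: int where "C > 0" "\<And>q w. prime q \<Longrightarrow> w \<in> lat_loc q v \<Longrightarrow> of_int C * qnrd a b w \<in> zloc q"
proof -
  obtain D :: int where D: "D > 0" "\<And>q w. prime q \<Longrightarrow> w \<in> lat_loc q v \<Longrightarrow>
      of_int D * q0 w \<in> zloc q \<and> of_int D * q1 w \<in> zloc q \<and> of_int D * q2 w \<in> zloc q \<and> of_int D * q3 w \<in> zloc q"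
    by (rule lat_loc_bounded_denoms[of v]) blast
  define E where "E = snd (quotient_of a) * snd (quotient_of b)"
  have E: "E > 0" unfolding E_def using quotient_of_denom_pos' by simp
  have "of_int E * a = of_int (snd (quotient_of b)) * (of_int (snd (quotient_of a)) * a)"
    "of_int E * b = of_int (snd (quotient_of a)) * (of_int (snd (quotient_of b)) * b)"
    unfolding E_def by (simp_all add: mult_ac)
  then have Ea: "of_int E * a \<in> \<int>" and Eb: "of_int E * b \<in> \<int>"
    using rat_denom_mult_Ints Ints_mult Ints_of_int by metis+
  have "of_int (E * E * (D * D)) * qnrd a b w \<in> zloc q" if q: "prime q" and w: "w \<in> lat_loc q v" for q w
  proof -
    have "of_int (E * E * (D * D)) * qnrd a b w =
        of_int E * of_int E * (of_int D * q0 w) * (of_int D * q0 w)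
       - of_int E * (of_int E * a) * (of_int D * q1 w) * (of_int D * q1 w)
       - of_int E * (of_int E * b) * (of_int D * q2 w) * (of_int D * q2 w)
       + (of_int E * a) * (of_int E * b) * (of_int D * q3 w) * (of_int D * q3 w)"
      unfolding qnrd_def by (simp add: power2_eq_square algebra_simps)
    also have "\<dots> \<in> zloc q"
      using D(2)[OF q w] Ints_zloc[OF q Ea] Ints_zloc[OF q Eb] q by (simp add: zloc_add zloc_diff zloc_mult)
    finally show ?thesis .
  qed
  then show ?thesis using that[of "E * E * (D * D)"] D(1) E by simp
qed

definition qlinear :: "(quat \<Rightarrow> quat) \<Rightarrow> bool" where
  "qlinear f \<longleftrightarrow> (\<forall>x y. f (x + y) = f x + f y) \<and> (\<forall>r x. f (qscale r x) = qscale r (f x))"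

lemma qlinear_zero: "qlinear f \<Longrightarrow> f 0 = 0"
  unfolding qlinear_def by (metis qscale_simps(2))

lemma qlinear_sum: "qlinear f \<Longrightarrow> f (sum g A) = (\<Sum>x\<in>A. f (g x))"
  by (induct A rule: infinite_finite_induct) (simp_all add: qlinear_zero, simp add: qlinear_def)

lemma qlinear_sum4: fixes v :: "nat \<Rightarrow> quat" shows "qlinear f \<Longrightarrow> f (\<Sum>i<4. qscale (c i) (v i)) = (\<Sum>i<4. qscale (c i) (f (v i)))"
  by (simp add: qlinear_sum) (simp add: qlinear_def)

lemma qlinear_indep:
  assumes f: "qlinear f" and inj: "\<And>x. f x = 0 \<Longrightarrow> x = 0" and v: "qbasis v"
  shows "qbasis (f \<circ> v)"
  unfolding qbasis_def
proof (rule allI, rule impI)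
  fix c assume "(\<Sum>i<4. qscale (c i) ((f \<circ> v) i)) = 0"
  then have "f (\<Sum>i<4. qscale (c i) (v i)) = 0" using qlinear_sum4[OF f] by simp
  then have "(\<Sum>i<4. qscale (c i) (v i)) = 0" using inj by blast
  then show "\<forall>i<4. c i = 0" using v unfolding qbasis_def by blast
qed

lemma qlinear_lat: assumes f: "qlinear f" shows "f ` lat v = lat (f \<circ> v)"
proof
  show "f ` lat v \<subseteq> lat (f \<circ> v)"
  proof
    fix y assume "y \<in> f ` lat v"
    then obtain x where "x \<in> lat v" "y = f x" by blast
    then obtain n where "y = f (\<Sum>i<4. qscale (of_int (n i)) (v i))" unfolding lat_mem by blast
    then have "y = (\<Sum>i<4. qscale (of_int (n i)) ((f \<circ> v) i))" using qlinear_sum4[OF f] by simp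
    then show "y \<in> lat (f \<circ> v)" unfolding lat_mem by (intro exI[of _ n])
  qed
  show "lat (f \<circ> v) \<subseteq> f ` lat v"
  proof
    fix y assume "y \<in> lat (f \<circ> v)"
    then obtain n where y: "y = (\<Sum>i<4. qscale (of_int (n i)) ((f \<circ> v) i))" unfolding lat_mem by blast
    have "y = f (\<Sum>i<4. qscale (of_int (n i)) (v i))" using qlinear_sum4[OF f] y by simp
    moreover have "(\<Sum>i<4. qscale (of_int (n i)) (v i)) \<in> lat v" unfolding lat_mem by (intro exI[of _ n]) simp
    ultimately show "y \<in> f ` lat v" by blast
  qed
qed

lemma qlinear_lat_loc: assumes f: "qlinear f" shows "f ` lat_loc q v = lat_loc q (f \<circ> v)"
proof
  show "f ` lat_loc q v \<subseteq> lat_loc q (f \<circ> v)"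
  proof
    fix y assume "y \<in> f ` lat_loc q v"
    then obtain x where "x \<in> lat_loc q v" "y = f x" by blast
    then obtain c where c: "\<forall>i<4. c i \<in> zloc q" "y = f (\<Sum>i<4. qscale (c i) (v i))" unfolding lat_loc_mem by blast
    then have "y = (\<Sum>i<4. qscale (c i) ((f \<circ> v) i))" using qlinear_sum4[OF f] by simp
    then show "y \<in> lat_loc q (f \<circ> v)" using c(1) unfolding lat_loc_mem by (intro exI[of _ c]) simp
  qed
  show "lat_loc q (f \<circ> v) \<subseteq> f ` lat_loc q v"
  proof
    fix y assume "y \<in> lat_loc q (f \<circ> v)"
    then obtain c where c: "\<forall>i<4. c i \<in> zloc q" "y = (\<Sum>i<4. qscale (c i) ((f \<circ> v) i))" unfolding lat_loc_mem by blast
    have "y = f (\<Sum>i<4. qscale (c i) (v i))" using qlinear_sum4[OF f] c(2) by simp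
    moreover have "(\<Sum>i<4. qscale (c i) (v i)) \<in> lat_loc q v" using c(1) unfolding lat_loc_mem by (intro exI[of _ c]) simp
    ultimately show "y \<in> f ` lat_loc q v" by blast
  qed
qed

lemma qlinear_rmul: "qlinear (\<lambda>y. qmul a b y x)"
  by (simp add: qlinear_def qmul_add_left qmul_scale_left)

lemma qlinear_scale: "qlinear (qscale r)"
  by (simp add: qlinear_def qscale_add_right mult.commute)

section \<open>Integer spans and cyclic subgroups of Q\<close>

lemma int_span_mem: "x \<in> int_span S \<longleftrightarrow> (\<exists>F c. finite F \<and> F \<subseteq> S \<and> x = (\<Sum>r\<in>F. of_int (c r) * r))"
  unfolding int_span_def by blast

lemma int_span_base: "x \<in> S \<Longrightarrow> x \<in> int_span S"
  unfolding int_span_mem by (intro exI[of _ "{x}"] exI[of _ "\<lambda>_. 1"]) simp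

lemma int_span_zero: "0 \<in> int_span S"
  unfolding int_span_mem by (intro exI[of _ "{}"]) simp

lemma int_span_add:
  assumes "x \<in> int_span S" "y \<in> int_span S" shows "x + y \<in> int_span S"
proof -
  obtain F c where F: "finite F" "F \<subseteq> S" "x = (\<Sum>r\<in>F. of_int (c r) * r)" using assms(1) unfolding int_span_mem by blast
  obtain G d where G: "finite G" "G \<subseteq> S" "y = (\<Sum>r\<in>G. of_int (d r) * r)" using assms(2) unfolding int_span_mem by blast
  define e where "e = (\<lambda>r. (if r \<in> F then c r else 0) + (if r \<in> G then d r else 0))"
  have "(\<Sum>r\<in>F \<union> G. of_int (e r) * r) = (\<Sum>r\<in>F \<union> G. of_int (if r \<in> F then c r else 0) * r) +
      (\<Sum>r\<in>F \<union> G. of_int (if r \<in> G then d r else 0) * r)"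
    unfolding e_def by (simp add: sum.distrib distrib_right)
  also have "(\<Sum>r\<in>F \<union> G. of_int (if r \<in> F then c r else 0) * r) = x"
    unfolding F(3) using F(1) G(1) by (intro sum.mono_neutral_cong_right) auto
  also have "(\<Sum>r\<in>F \<union> G. of_int (if r \<in> G then d r else 0) * r) = y"
    unfolding G(3) using F(1) G(1) by (intro sum.mono_neutral_cong_right) auto
  finally show ?thesis unfolding int_span_mem using F G by (intro exI[of _ "F \<union> G"] exI[of _ e]) auto
qed

lemma int_span_mult:
  assumes "x \<in> int_span S" shows "of_int k * x \<in> int_span S"
proof -
  obtain F c where F: "finite F" "F \<subseteq> S" "x = (\<Sum>r\<in>F. of_int (c r) * r)" using assms(1) unfolding int_span_mem by blast
  have "of_int k * x = (\<Sum>r\<in>F. of_int (k * c r) * r)" unfolding F(3) by (simp add: sum_distrib_left mult.assoc)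
  then show ?thesis unfolding int_span_mem using F by (intro exI[of _ F] exI[of _ "\<lambda>r. k * c r"]) auto
qed

lemma int_span_minimal:
  assumes M0: "0 \<in> M" and Madd: "\<And>x y. x \<in> M \<Longrightarrow> y \<in> M \<Longrightarrow> x + y \<in> M"
    and Mmul: "\<And>k x. x \<in> M \<Longrightarrow> of_int k * x \<in> M" and S: "S \<subseteq> M"
  shows "int_span S \<subseteq> M"
proof
  fix x assume "x \<in> int_span S"
  then obtain F c where F: "finite F" "F \<subseteq> S" "x = (\<Sum>r\<in>F. of_int (c r) * r)" unfolding int_span_mem by blast
  have "(\<Sum>r\<in>F. of_int (c r) * r) \<in> M" using F(1,2)
    by (induct F rule: finite_induct) (use S M0 in \<open>auto intro!: Madd Mmul\<close>)
  then show "x \<in> M" using F(3) by simp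
qed

lemma int_span_scale: "int_span ((\<lambda>r. k * r) ` S) = (\<lambda>r. k * r) ` int_span S"
proof
  show "int_span ((*) k ` S) \<subseteq> (*) k ` int_span S"
  proof (rule int_span_minimal)
    show "0 \<in> (*) k ` int_span S" using int_span_zero by force
    show "x + y \<in> (*) k ` int_span S" if A: "x \<in> (*) k ` int_span S" and B: "y \<in> (*) k ` int_span S" for x y
    proof -
      obtain x' y' where "x' \<in> int_span S" "y' \<in> int_span S" "x = k * x'" "y = k * y'" using A B by blast
      then show ?thesis by (intro image_eqI[of _ _ "x' + y'"]) (auto simp: int_span_add distrib_left)
    qed
    show "of_int m * x \<in> (*) k ` int_span S" if A: "x \<in> (*) k ` int_span S" for m x
    proof -
      obtain x' where "x' \<in> int_span S" "x = k * x'" using A by blast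
      then show ?thesis by (intro image_eqI[of _ _ "of_int m * x'"]) (auto simp: int_span_mult)
    qed
    show "(*) k ` S \<subseteq> (*) k ` int_span S" using int_span_base by blast
  qed
  show "(*) k ` int_span S \<subseteq> int_span ((*) k ` S)"
  proof -
    have "int_span S \<subseteq> {x. k * x \<in> int_span ((*) k ` S)}"
    proof (rule int_span_minimal)
      show "0 \<in> {x. k * x \<in> int_span ((*) k ` S)}" using int_span_zero by simp
      show "x + y \<in> {x. k * x \<in> int_span ((*) k ` S)}"
        if "x \<in> {x. k * x \<in> int_span ((*) k ` S)}" "y \<in> {x. k * x \<in> int_span ((*) k ` S)}" for x y
        using int_span_add[of "k * x" _ "k * y"] that by (simp add: distrib_left)
      show "of_int m * x \<in> {x. k * x \<in> int_span ((*) k ` S)}"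
        if "x \<in> {x. k * x \<in> int_span ((*) k ` S)}" for m x
        using int_span_mult[of "k * x" _ m] that by (simp add: mult.left_commute)
      show "S \<subseteq> {x. k * x \<in> int_span ((*) k ` S)}" by (auto intro: int_span_base)
    qed
    then show ?thesis by blast
  qed
qed

lemma int_subgroup_cyclic:
  fixes H :: "int set"
  assumes Hadd: "\<And>x y. x \<in> H \<Longrightarrow> y \<in> H \<Longrightarrow> x + y \<in> H"
    and Hmul: "\<And>k x. x \<in> H \<Longrightarrow> k * x \<in> H" and ne: "h0 \<in> H" "h0 \<noteq> 0"
  shows "\<exists>g>0. H = {n * g | n. True}"
proof -
  have "\<bar>h0\<bar> \<in> H"
  proof (cases "h0 \<ge> 0")
    case False then show ?thesis using Hmul[OF ne(1), of "-1"] by simp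
  qed (use ne in simp)
  define n0 where "n0 = nat \<bar>h0\<bar>"
  have n0: "int n0 \<in> H" "n0 > 0" unfolding n0_def using \<open>\<bar>h0\<bar> \<in> H\<close> ne(2) by simp_all
  define m where "m = (LEAST m::nat. int m \<in> H \<and> m > 0)"
  have m: "int m \<in> H" "m > 0" using LeastI[of "\<lambda>m. int m \<in> H \<and> m > 0" n0] n0 unfolding m_def by auto
  have mmin: "m \<le> k" if "int k \<in> H" "k > 0" for k using Least_le[of "\<lambda>m. int m \<in> H \<and> m > 0" k] that unfolding m_def by auto
  have "H = {n * int m | n. True}"
  proof
    show "H \<subseteq> {n * int m | n. True}"
    proof
      fix x assume x: "x \<in> H"
      have eqm: "x mod int m = x + (- (x div int m)) * int m"
        by (simp add: minus_div_mult_eq_mod[symmetric])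
      have "(- (x div int m)) * int m \<in> H" using Hmul[OF m(1)] .
      then have xm: "x mod int m \<in> H" unfolding eqm using Hadd[OF x] by blast
      have r: "x mod int m \<ge> 0" "x mod int m < int m" using m by simp_all
      have "x mod int m = 0"
      proof (rule ccontr)
        assume "x mod int m \<noteq> 0"
        then have "nat (x mod int m) > 0" using r by simp
        moreover have "int (nat (x mod int m)) \<in> H" using xm r by simp
        ultimately have "m \<le> nat (x mod int m)" using mmin by blast
        then show False using r by linarith
      qed
      then have "x = (x div int m) * int m" by (metis div_mult_mod_eq add_0_right)
      then show "x \<in> {n * int m | n. True}" by blast
    qed
    show "{n * int m | n. True} \<subseteq> H" using m Hmul by auto
  qed
  then show ?thesis using m by (intro exI[of _ "int m"]) auto
qed

lemma rat_subgroup_cyclic: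
  fixes H :: "rat set"
  assumes Hadd: "\<And>x y. x \<in> H \<Longrightarrow> y \<in> H \<Longrightarrow> x + y \<in> H"
    and Hmul: "\<And>k x. x \<in> H \<Longrightarrow> of_int k * x \<in> H" and ne: "h0 \<in> H" "h0 \<noteq> 0"
    and D: "D > 0" "\<And>x. x \<in> H \<Longrightarrow> of_int D * x \<in> \<int>"
  shows "\<exists>r>0. H = {of_int n * r | n. True}"
proof -
  define H' where "H' = {z::int. of_int z / of_int D \<in> H}"
  have H_eq: "H = (\<lambda>z. of_int z / of_int D) ` H'"
  proof
    show "H \<subseteq> (\<lambda>z. of_int z / of_int D) ` H'"
    proof
      fix x assume x: "x \<in> H"
      then obtain z where "of_int D * x = of_int z" using D(2) by (blast elim: Ints_cases)
      then have "x = of_int z / of_int D" using D(1) by (simp add: field_simps)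
      then show "x \<in> (\<lambda>z. of_int z / of_int D) ` H'" using x unfolding H'_def by blast
    qed
  qed (auto simp: H'_def)
  obtain z0 where z0: "z0 \<in> H'" "z0 \<noteq> 0" using ne unfolding H_eq by auto
  have "x + y \<in> H'" if "x \<in> H'" "y \<in> H'" for x y
    using Hadd[OF that[unfolded H'_def, simplified]] by (simp add: H'_def add_divide_distrib)
  moreover have "k * x \<in> H'" if "x \<in> H'" for k x
    using Hmul[OF that[unfolded H'_def, simplified], of k] by (simp add: H'_def)
  ultimately obtain g where g: "g > 0" "H' = {n * g | n. True}"
    using int_subgroup_cyclic[of H' z0] z0 by blast
  have "H = {of_int n * (of_int g / of_int D) | n. True}"
    unfolding H_eq g(2) by (auto simp: image_iff) (metis of_int_mult times_divide_eq_right)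
  then show ?thesis using g(1) D(1) by (intro exI[of _ "of_int g / of_int D"]) simp
qed

lemma rat_cyclic_gen_unique:
  fixes r s :: rat
  assumes "r > 0" "s > 0" "{of_int n * r | n. True} = {of_int n * s | n. True}"
  shows "r = s"
proof -
  have "r = of_int 1 * r" by simp
  then have "r \<in> {of_int n * r | n. True}" by blast
  then have "r \<in> {of_int n * s | n. True}" unfolding assms(3)[symmetric] .
  then obtain n where n: "r = of_int n * s" by blast
  have "s = of_int 1 * s" by simp
  then have "s \<in> {of_int n * s | n. True}" by blast
  then have "s \<in> {of_int n * r | n. True}" unfolding assms(3) .
  then obtain m where m: "s = of_int m * r" by blast
  have "r = of_int (n * m) * r" using n m by simp
  then have "of_int (n * m) = (1::rat)" using assms(1) by simp
  then have nm: "n * m = 1" by (simp only: of_int_eq_1_iff)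
  have "n > 0" using n assms by (metis of_int_0_less_iff zero_less_mult_pos2)
  then have "n = 1" using nm pos_zmult_eq_1_iff by blast
  then show ?thesis using n by simp
qed

section \<open>The norm of a lattice\<close>

definition qpolar :: "rat \<Rightarrow> rat \<Rightarrow> quat \<Rightarrow> quat \<Rightarrow> rat" where
  "qpolar a b x y = 2 * (q0 x * q0 y - a * q1 x * q1 y - b * q2 x * q2 y + a * b * q3 x * q3 y)"

lemma qnrd_add: "qnrd a b (x + y) = qnrd a b x + qnrd a b y + qpolar a b x y"
  by (simp add: qnrd_def qpolar_def power2_eq_square algebra_simps)

lemma qpolar_eq: "qpolar a b x y = qnrd a b (x + y) - qnrd a b x - qnrd a b y"
  by (simp add: qnrd_add)

lemma qpolar_add_left: "qpolar a b (x + y) z = qpolar a b x z + qpolar a b y z"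
  by (simp add: qpolar_def algebra_simps)

lemma qpolar_scale_left: "qpolar a b (qscale r x) z = r * qpolar a b x z"
  by (simp add: qpolar_def algebra_simps)

lemma qpolar_scale_right: "qpolar a b z (qscale r x) = r * qpolar a b z x"
  by (simp add: qpolar_def algebra_simps)

lemma qpolar_zero_left [simp]: "qpolar a b 0 z = 0"
  by (simp add: qpolar_def)

lemma qpolar_sum_left: "qpolar a b (sum f A) z = (\<Sum>i\<in>A. qpolar a b (f i) z)"
  by (induct A rule: infinite_finite_induct) (simp_all add: qpolar_add_left)

lemma qnrd_lincomb_mem:
  fixes R M :: "rat set" and v :: "nat \<Rightarrow> quat"
  assumes M0: "0 \<in> M" and Madd: "\<And>x y. x \<in> M \<Longrightarrow> y \<in> M \<Longrightarrow> x + y \<in> M"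
    and Mmul: "\<And>r x. r \<in> R \<Longrightarrow> x \<in> M \<Longrightarrow> r * x \<in> M"
    and Rmul: "\<And>r s. r \<in> R \<Longrightarrow> s \<in> R \<Longrightarrow> r * s \<in> R"
    and c: "\<forall>i<4. c i \<in> R"
    and nv: "\<forall>i<4. qnrd a b (v i) \<in> M" and bv: "\<forall>i<4. \<forall>j<4. qpolar a b (v i) (v j) \<in> M"
  shows "qnrd a b (\<Sum>i<4. qscale (c i) (v i)) \<in> M"
proof -
  have Msum: "(\<And>i. i \<in> A \<Longrightarrow> f i \<in> M) \<Longrightarrow> sum f A \<in> M" for f and A :: "nat set"
    by (induct A rule: infinite_finite_induct) (simp_all add: M0 Madd)
  have "n \<le> 4 \<Longrightarrow> qnrd a b (\<Sum>i<n. qscale (c i) (v i)) \<in> M" for n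
  proof (induct n)
    case 0 then show ?case using M0 by (simp add: qnrd_def)
  next
    case (Suc n)
    have "qnrd a b (\<Sum>i<Suc n. qscale (c i) (v i)) =
        qnrd a b (\<Sum>i<n. qscale (c i) (v i)) + qnrd a b (qscale (c n) (v n)) +
        qpolar a b (\<Sum>i<n. qscale (c i) (v i)) (qscale (c n) (v n))"
      by (simp add: qnrd_add)
    also have "qpolar a b (\<Sum>i<n. qscale (c i) (v i)) (qscale (c n) (v n)) =
        c n * (\<Sum>i<n. c i * qpolar a b (v i) (v n))"
      by (simp add: qpolar_sum_left qpolar_scale_left qpolar_scale_right sum_distrib_left mult_ac)
    also have "qnrd a b (qscale (c n) (v n)) = (c n * c n) * qnrd a b (v n)"
      by (simp add: qnrd_scale power2_eq_square)
    finally have eq: "qnrd a b (\<Sum>i<Suc n. qscale (c i) (v i)) =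
        qnrd a b (\<Sum>i<n. qscale (c i) (v i)) + (c n * c n) * qnrd a b (v n) +
        c n * (\<Sum>i<n. c i * qpolar a b (v i) (v n))" .
    have "qnrd a b (\<Sum>i<n. qscale (c i) (v i)) \<in> M" using Suc by simp
    moreover have "(c n * c n) * qnrd a b (v n) \<in> M" using Suc.prems c nv by (simp add: Mmul Rmul)
    moreover have "(\<Sum>i<n. c i * qpolar a b (v i) (v n)) \<in> M"
      using Suc.prems c bv by (intro Msum Mmul) auto
    then have "c n * (\<Sum>i<n. c i * qpolar a b (v i) (v n)) \<in> M" using Suc.prems c by (simp add: Mmul)
    ultimately show ?case unfolding eq by (intro Madd)
  qed
  then show ?thesis by simp
qed

lemma lat_norm_exists:
  assumes ab: "a < 0" "b < 0" and v: "qbasis v"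
  shows "\<exists>r>0. int_span (qnrd a b ` lat v) = {of_int n * r | n. True}"
proof -
  obtain C :: int where C: "C > 0" "\<And>q w. prime q \<Longrightarrow> w \<in> lat_loc q v \<Longrightarrow> of_int C * qnrd a b w \<in> zloc q"
    by (rule qnrd_lat_loc_bounded[where v = v]) blast
  define M where "M = {x :: rat. of_int C * x \<in> \<int>}"
  have "int_span (qnrd a b ` lat v) \<subseteq> M"
  proof (rule int_span_minimal)
    show "0 \<in> M" by (simp add: M_def)
    show "x + y \<in> M" if "x \<in> M" "y \<in> M" for x y
      using that by (simp add: M_def distrib_left)
    show "of_int k * x \<in> M" if "x \<in> M" for k x
      using that Ints_mult[OF Ints_of_int[of k]] unfolding M_def by (metis mem_Collect_eq mult.left_commute)
    show "qnrd a b ` lat v \<subseteq> M"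
    proof
      fix x assume "x \<in> qnrd a b ` lat v"
      then obtain w where "w \<in> lat v" "x = qnrd a b w" by blast
      then show "x \<in> M" unfolding M_def using C(2) lat_subset_lat_loc by (blast intro: Ints_if_zloc_all)
    qed
  qed
  moreover have "qnrd a b (v 0) \<in> int_span (qnrd a b ` lat v)" "qnrd a b (v 0) \<noteq> 0"
    using int_span_base lat_basis[of 0 v] qnrd_pos[OF ab qbasis_nonzero[OF v, of 0]] by auto
  ultimately show ?thesis
    by (intro rat_subgroup_cyclic[OF int_span_add int_span_mult _ _ C(1)]) (auto simp: M_def)
qed

lemma lat_norm_char:
  assumes ab: "a < 0" "b < 0" and v: "qbasis v"
  shows "lat_norm a b (lat v) > 0 \<and> int_span (qnrd a b ` lat v) = {of_int n * lat_norm a b (lat v) | n. True}"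
proof -
  obtain r where r: "r > 0" "int_span (qnrd a b ` lat v) = {of_int n * r | n. True}"
    using lat_norm_exists[OF ab v] by blast
  have "lat_norm a b (lat v) = r"
    unfolding lat_norm_def
  proof (rule the_equality)
    show "r > 0 \<and> int_span (qnrd a b ` lat v) = {of_int n * r | n. True}" using r by simp
    show "s = r" if A: "s > 0 \<and> int_span (qnrd a b ` lat v) = {of_int n * s | n. True}" for s
    proof -
      have "{of_int n * s | n. True} = {of_int n * r | n. True}" using A r(2) by (simp only:)
      then show ?thesis using rat_cyclic_gen_unique[of s r] A r(1) by blast
    qed
  qed
  then show ?thesis using r by simp
qed

lemma lat_norm_eqI:
  assumes ab: "a < 0" "b < 0" and v: "qbasis v" and r: "r > 0" "int_span (qnrd a b ` lat v) = {of_int n * r | n. True}"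
  shows "lat_norm a b (lat v) = r"
proof -
  have c: "lat_norm a b (lat v) > 0" "int_span (qnrd a b ` lat v) = {of_int n * lat_norm a b (lat v) | n. True}"
    using lat_norm_char[OF ab v] by auto
  have "{of_int n * lat_norm a b (lat v) | n. True} = {of_int n * r | n. True}" using c(2) r(2) by (simp only:)
  then show ?thesis using rat_cyclic_gen_unique[of "lat_norm a b (lat v)" r] c(1) r(1) by blast
qed

lemma qpolar_lat_int_span:
  assumes "x \<in> lat v" "y \<in> lat v"
  shows "qpolar a b x y \<in> int_span (qnrd a b ` lat v)"
proof -
  have "qnrd a b (x + y) \<in> int_span (qnrd a b ` lat v)" "qnrd a b x \<in> int_span (qnrd a b ` lat v)"
    "qnrd a b y \<in> int_span (qnrd a b ` lat v)"
    using assms lat_add by (auto intro: int_span_base)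
  then have "qnrd a b (x + y) + of_int (- 1) * qnrd a b x + of_int (- 1) * qnrd a b y
      \<in> int_span (qnrd a b ` lat v)"
    by (intro int_span_add int_span_mult)
  then show ?thesis by (simp add: qpolar_eq)
qed

lemma qnrd_div_lat_norm_zloc:
  assumes ab: "a < 0" "b < 0" and v: "qbasis v" and q: "prime q" and w: "w \<in> lat_loc q v"
  shows "qnrd a b w / lat_norm a b (lat v) \<in> zloc q"
proof -
  define N where "N = lat_norm a b (lat v)"
  have N: "N > 0" "int_span (qnrd a b ` lat v) = {of_int n * N | n. True}"
    using lat_norm_char[OF ab v] unfolding N_def by auto
  define M where "M = {x. x / N \<in> zloc q}"
  have span_M: "int_span (qnrd a b ` lat v) \<subseteq> M"
    unfolding N(2) M_def using N(1) q by auto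
  obtain c where c: "\<forall>i<4. c i \<in> zloc q" "w = (\<Sum>i<4. qscale (c i) (v i))"
    using w unfolding lat_loc_mem by blast
  have "qnrd a b (\<Sum>i<4. qscale (c i) (v i)) \<in> M"
  proof (rule qnrd_lincomb_mem[where R = "zloc q"])
    show "0 \<in> M" unfolding M_def using q by simp
    show "x + y \<in> M" if "x \<in> M" "y \<in> M" for x y
      using that zloc_add[OF q] unfolding M_def by (simp add: add_divide_distrib)
    show "r * x \<in> M" if "r \<in> zloc q" "x \<in> M" for r x
      using that zloc_mult[OF q] unfolding M_def by (metis mem_Collect_eq times_divide_eq_right)
    show "r * s \<in> zloc q" if "r \<in> zloc q" "s \<in> zloc q" for r s
      using that by (rule zloc_mult[OF q])
    show "\<forall>i<4. qnrd a b (v i) \<in> M"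
      using span_M int_span_base lat_basis by blast
    show "\<forall>i<4. \<forall>j<4. qpolar a b (v i) (v j) \<in> M"
      using span_M qpolar_lat_int_span lat_basis by blast
  qed (use c(1) in auto)
  then show ?thesis using c unfolding M_def N_def by simp
qed

lemma lat_norm_div_qnrd_zloc:
  assumes ab: "a < 0" "b < 0" and v: "qbasis v" and q: "prime q"
  shows "\<exists>w\<in>lat v. qnrd a b w \<noteq> 0 \<and> lat_norm a b (lat v) / qnrd a b w \<in> zloc q"
proof (rule ccontr)
  assume contra: "\<not> ?thesis"
  define N where "N = lat_norm a b (lat v)"
  have N: "N > 0" "int_span (qnrd a b ` lat v) = {of_int n * N | n. True}"
    using lat_norm_char[OF ab v] unfolding N_def by auto
  have "N = of_int 1 * N" by simp
  then have "N \<in> int_span (qnrd a b ` lat v)" unfolding N(2) by blast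
  then obtain F c where F: "finite F" "F \<subseteq> qnrd a b ` lat v" "N = (\<Sum>r\<in>F. of_int (c r) * r)"
    unfolding int_span_mem by blast
  have qN: "of_nat q * N \<noteq> 0" using N(1) q prime_gt_0_nat by simp
  have each: "r / (of_nat q * N) \<in> zloc q" if R: "r \<in> F" for r
  proof (cases "r = 0")
    case False
    obtain w where w: "w \<in> lat v" "r = qnrd a b w" using R F(2) by blast
    have "\<not> N / r \<in> zloc q" using contra w False unfolding N_def by blast
    then have "pval q (N / r) < 0" using zloc_iff_pval[OF q] by simp
    then have "pval q N - pval q r < 0" using False N(1) q by (simp add: pval_divide)
    then have "pval q (r / (of_nat q * N)) \<ge> 0"
      using False N(1) q qN by (simp add: pval_divide pval_mult pval_prime_self prime_gt_0_nat)
    then show ?thesis using zloc_iff_pval[OF q] by simp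
  qed (simp add: q)
  have "N / (of_nat q * N) = (\<Sum>r\<in>F. of_int (c r) * (r / (of_nat q * N)))"
    unfolding F(3) by (simp add: sum_divide_distrib)
  also have "\<dots> \<in> zloc q" using each q by (intro zloc_sum zloc_mult) auto
  finally have "1 / of_nat q \<in> zloc q" using N(1) by simp
  moreover have "pval q (1 / of_nat q) = -1" using q pval_prime_self[OF q] prime_gt_0_nat[OF q]
    by (simp add: pval_divide)
  ultimately show False using zloc_iff_pval[OF q] prime_gt_0_nat[OF q] by simp
qed

section \<open>Indices of lattices\<close>

definition add_subgroup :: "quat set \<Rightarrow> bool" where
  "add_subgroup S \<longleftrightarrow> 0 \<in> S \<and> (\<forall>x\<in>S. \<forall>y\<in>S. x + y \<in> S) \<and> (\<forall>x\<in>S. - x \<in> S)"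

definition coset :: "quat set \<Rightarrow> quat \<Rightarrow> quat set" where
  "coset B x = {x + y | y. y \<in> B}"

lemma lat_index_coset: "lat_index A B = card (coset B ` A)"
  unfolding lat_index_def coset_def by simp

lemma add_subgroup_lat: "add_subgroup (lat v)"
  unfolding add_subgroup_def using lat_zero lat_add lat_minus by blast

lemma coset_eq_iff:
  assumes M: "add_subgroup M"
  shows "coset M x = coset M y \<longleftrightarrow> x - y \<in> M"
proof
  assume eq: "coset M x = coset M y"
  have "x \<in> coset M x" unfolding coset_def using M unfolding add_subgroup_def by force
  then have "x \<in> coset M y" using eq by simp
  then obtain m where "m \<in> M" "x = y + m" unfolding coset_def by blast
  then show "x - y \<in> M" by simp
next
  assume d: "x - y \<in> M"
  have "x + m \<in> coset M y" "y + m \<in> coset M x" if "m \<in> M" for m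
  proof -
    have "(x - y) + m \<in> M" "- (x - y) + m \<in> M" using d M that unfolding add_subgroup_def by blast+
    moreover have "x + m = y + ((x - y) + m)" "y + m = x + (- (x - y) + m)" by simp_all
    ultimately show "x + m \<in> coset M y" "y + m \<in> coset M x" unfolding coset_def by blast+
  qed
  then show "coset M x = coset M y" unfolding coset_def by blast
qed

lemma coset_translate: "coset K (x + m) = (\<lambda>z. x + z) ` coset K m"
  unfolding coset_def by (auto simp: add.assoc image_iff)

lemma coset_sum_subgroup:
  assumes K: "add_subgroup K" and M: "add_subgroup M" and KsubM: "K \<subseteq> M"
  shows "{s + m | s m. s \<in> coset K x \<and> m \<in> M} = coset M x"
proof
  show "{s + m | s m. s \<in> coset K x \<and> m \<in> M} \<subseteq> coset M x"
  proof (clarify, unfold coset_def, clarify)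
    fix k m assume "k \<in> K" "m \<in> M"
    then have "k + m \<in> M" using KsubM M unfolding add_subgroup_def by blast
    then show "\<exists>y. x + k + m = x + y \<and> y \<in> M" by (force simp: add.assoc)
  qed
  show "coset M x \<subseteq> {s + m | s m. s \<in> coset K x \<and> m \<in> M}"
    using K unfolding coset_def add_subgroup_def by force
qed

lemma finite_cosets_mono:
  assumes K: "add_subgroup K" and M: "add_subgroup M" and KsubM: "K \<subseteq> M" and fin: "finite (coset K ` L)"
  shows "finite (coset M ` L)"
proof -
  have "coset M ` L = (\<lambda>S. {s + m | s m. s \<in> S \<and> m \<in> M}) ` coset K ` L"
    using coset_sum_subgroup[OF K M KsubM] by (simp add: image_image)
  then show ?thesis using fin by simp
qed

text \<open>The cosets of K inside a fixed coset x0 + M are the translates by x0 of the cosets of K in M.\<close>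

lemma card_coset_fiber:
  assumes M: "add_subgroup M" and L: "add_subgroup L" and MsubL: "M \<subseteq> L" and x0: "x0 \<in> L"
  shows "card {coset K x | x. x \<in> L \<and> coset M x = coset M x0} = lat_index M K"
proof -
  have "{coset K x | x. x \<in> L \<and> coset M x = coset M x0} = (\<lambda>S. (\<lambda>z. x0 + z) ` S) ` coset K ` M"
  proof (intro equalityI subsetI)
    fix S assume "S \<in> {coset K x | x. x \<in> L \<and> coset M x = coset M x0}"
    then obtain x where x: "x \<in> L" "coset M x = coset M x0" "S = coset K x" by blast
    then have "x - x0 \<in> M" using coset_eq_iff[OF M] by blast
    moreover have "S = (\<lambda>z. x0 + z) ` coset K (x - x0)"
      using x(3) coset_translate[of K x0 "x - x0"] by simp
    ultimately show "S \<in> (\<lambda>S. (\<lambda>z. x0 + z) ` S) ` coset K ` M" by blast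
  next
    fix S assume "S \<in> (\<lambda>S. (\<lambda>z. x0 + z) ` S) ` coset K ` M"
    then obtain m where m: "m \<in> M" "S = coset K (x0 + m)" using coset_translate by blast
    have "x0 + m \<in> L" using x0 m(1) MsubL L unfolding add_subgroup_def by blast
    moreover have "coset M (x0 + m) = coset M x0" using m(1) coset_eq_iff[OF M] by simp
    ultimately show "S \<in> {coset K x | x. x \<in> L \<and> coset M x = coset M x0}" using m(2) by blast
  qed
  moreover have "inj_on (\<lambda>S. (\<lambda>z. x0 + z) ` S) (coset K ` M)"
    by (rule inj_onI) (simp add: inj_image_eq_iff)
  ultimately show ?thesis unfolding lat_index_coset by (simp add: card_image)
qed

lemma lat_index_tower:
  assumes K: "add_subgroup K" and M: "add_subgroup M" and L: "add_subgroup L"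
    and KsubM: "K \<subseteq> M" and MsubL: "M \<subseteq> L" and fin: "finite (coset K ` L)"
  shows "lat_index L K = lat_index L M * lat_index M K"
proof -
  define F where "F = (\<lambda>C. {coset K x | x. x \<in> L \<and> coset M x = C})"
  have "lat_index L K = card (\<Union>C\<in>coset M ` L. F C)"
    unfolding lat_index_coset F_def by (rule arg_cong[where f = card]) blast
  also have "\<dots> = (\<Sum>C\<in>coset M ` L. card (F C))"
  proof -
    have "finite (F C)" for C
      using fin unfolding F_def by (rule finite_subset[rotated]) blast
    moreover have "F C \<inter> F C' = {}" if "C \<noteq> C'" for C C'
    proof -
      have "coset M x = coset M y" if "coset K x = coset K y" for x y
        using that KsubM coset_eq_iff[OF K] coset_eq_iff[OF M] by blast
      then show ?thesis using \<open>C \<noteq> C'\<close> unfolding F_def by blast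
    qed
    ultimately show ?thesis
      using finite_cosets_mono[OF K M KsubM fin] by (intro card_UN_disjoint) auto
  qed
  also have "\<dots> = (\<Sum>C\<in>coset M ` L. lat_index M K)"
    using card_coset_fiber[OF M L MsubL] unfolding F_def by (intro sum.cong) auto
  also have "\<dots> = lat_index L M * lat_index M K" unfolding lat_index_coset by simp
  finally show ?thesis .
qed

lemma lat_index_image:
  assumes add: "\<And>x y. f (x + y) = f x + f y" and inj: "inj f"
  shows "lat_index (f ` L) (f ` M) = lat_index L M"
proof -
  have im: "coset (f ` M) (f x) = f ` coset M x" for x
  proof
    show "coset (f ` M) (f x) \<subseteq> f ` coset M x"
    proof
      fix z assume "z \<in> coset (f ` M) (f x)"
      then obtain m where "m \<in> M" "z = f x + f m" unfolding coset_def by blast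
      then have "z = f (x + m)" "x + m \<in> coset M x" using add unfolding coset_def by auto
      then show "z \<in> f ` coset M x" by blast
    qed
    show "f ` coset M x \<subseteq> coset (f ` M) (f x)"
    proof
      fix z assume "z \<in> f ` coset M x"
      then obtain m where "m \<in> M" "z = f (x + m)" unfolding coset_def by blast
      then have "z = f x + f m" using add by simp
      then show "z \<in> coset (f ` M) (f x)" using \<open>m \<in> M\<close> unfolding coset_def by blast
    qed
  qed
  have "coset (f ` M) ` (f ` L) = (\<lambda>S. f ` S) ` (coset M ` L)"
    using im by (auto simp: image_iff)
  moreover have "inj_on (\<lambda>S. f ` S) (coset M ` L)"
    using inj by (auto intro!: inj_onI simp: inj_image_eq_iff)
  ultimately show ?thesis unfolding lat_index_coset by (simp add: card_image)
qed

lemma qscale_lat: "qscale r ` lat v = lat (qscale r \<circ> v)"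
  using qlinear_lat[OF qlinear_scale] .

lemma lat_diff_mem_qscale_iff:
  assumes v: "qbasis v"
  shows "(\<Sum>i<4. qscale (of_int (n i)) (v i)) - (\<Sum>i<4. qscale (of_int (n' i)) (v i))
      \<in> qscale (of_nat s) ` lat v \<longleftrightarrow> (\<forall>i<4. int s dvd n i - n' i)"
  (is "?d \<in> _ \<longleftrightarrow> _")
proof -
  have d: "?d = (\<Sum>i<4. qscale (of_int (n i - n' i)) (v i))" by (simp add: sum4_combine)
  have "?d \<in> qscale (of_nat s) ` lat v \<longleftrightarrow>
      (\<exists>m. ?d = (\<Sum>i<4. qscale (of_int (int s * m i)) (v i)))"
    unfolding qscale_lat lat_mem by (simp add: mult.commute)
  also have "\<dots> \<longleftrightarrow> (\<exists>m. \<forall>i<4. n i - n' i = int s * m i)"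
  proof
    assume "\<exists>m. ?d = (\<Sum>i<4. qscale (of_int (int s * m i)) (v i))"
    then obtain m where "?d = (\<Sum>i<4. qscale (of_int (int s * m i)) (v i))" by blast
    then have "\<forall>i<4. (of_int (n i - n' i) :: rat) = of_int (int s * m i)"
      using qbasis_coeff_unique[OF v, of "\<lambda>i. of_int (n i - n' i)" "\<lambda>i. of_int (int s * m i)"]
      unfolding d by simp
    then show "\<exists>m. \<forall>i<4. n i - n' i = int s * m i" by (intro exI[of _ m]) (simp only: of_int_eq_iff)
  next
    assume "\<exists>m. \<forall>i<4. n i - n' i = int s * m i"
    then obtain m where "\<forall>i<4. n i - n' i = int s * m i" by blast
    then show "\<exists>m. ?d = (\<Sum>i<4. qscale (of_int (int s * m i)) (v i))"
      unfolding d by (intro exI[of _ m] sum.cong) simp_all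
  qed
  also have "\<dots> \<longleftrightarrow> (\<forall>i<4. int s dvd n i - n' i)"
  proof
    assume "\<forall>i<4. int s dvd n i - n' i"
    then have "\<forall>i. \<exists>k. i < 4 \<longrightarrow> n i - n' i = int s * k" by (auto simp: dvd_def)
    then show "\<exists>m. \<forall>i<4. n i - n' i = int s * m i" by (rule choice)
  qed auto
  finally show ?thesis .
qed

text \<open>The cosets of s L in L are represented by the coefficient vectors with entries in [0, s).\<close>

lemma lat_index_qscale:
  assumes v: "qbasis v" and s: "s > 0"
  shows "lat_index (lat v) (qscale (of_nat s) ` lat v) = s ^ 4"
proof -
  define M where "M = qscale (of_nat s) ` lat v"
  have M: "add_subgroup M" unfolding M_def qscale_lat by (rule add_subgroup_lat)
  define R where "R = PiE {..<4::nat} (\<lambda>_. {0..<int s})"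
  define \<rho> where "\<rho> = (\<lambda>r::nat \<Rightarrow> int. \<Sum>i<4. qscale (of_int (r i)) (v i))"
  have coset_\<rho>: "coset M (\<rho> n) = coset M (\<rho> n') \<longleftrightarrow> (\<forall>i<4. int s dvd n i - n' i)" for n n'
    unfolding coset_eq_iff[OF M] unfolding M_def \<rho>_def by (rule lat_diff_mem_qscale_iff[OF v])
  have reps: "coset M ` lat v = (\<lambda>r. coset M (\<rho> r)) ` R"
  proof (intro equalityI subsetI)
    fix C assume "C \<in> coset M ` lat v"
    then obtain n where n: "C = coset M (\<rho> n)" unfolding lat_def \<rho>_def by blast
    define r where "r = restrict (\<lambda>i. n i mod int s) {..<4}"
    have "r \<in> R" using s unfolding R_def r_def by (simp add: restrict_PiE_iff)
    moreover have "C = coset M (\<rho> r)"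
      unfolding n coset_\<rho> r_def by (simp add: mod_eq_dvd_iff[symmetric])
    ultimately show "C \<in> (\<lambda>r. coset M (\<rho> r)) ` R" by blast
  qed (auto simp: lat_def \<rho>_def)
  have inj: "inj_on (\<lambda>r. coset M (\<rho> r)) R"
  proof (rule inj_onI)
    fix r r' assume r: "r \<in> R" "r' \<in> R" "coset M (\<rho> r) = coset M (\<rho> r')"
    have "r i = r' i" if "i < 4" for i
    proof -
      have "r i mod int s = r' i mod int s"
        using r(3) that unfolding coset_\<rho> by (simp add: mod_eq_dvd_iff)
      then show ?thesis using r(1,2) that unfolding R_def by (auto simp: PiE_iff)
    qed
    then show "r = r'" using r(1,2) unfolding R_def by (intro PiE_ext) auto
  qed
  have "lat_index (lat v) M = card R"
    unfolding lat_index_coset reps by (rule card_image[OF inj])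
  also have "\<dots> = s ^ 4" unfolding R_def by (simp add: card_PiE)
  finally show ?thesis unfolding M_def .
qed

lemma lat_index_between_qscale:
  assumes v: "qbasis v" and t: "t > 0" and M: "add_subgroup M" and tM: "qscale (of_nat t) ` lat v \<subseteq> M" and MsubL: "M \<subseteq> lat v"
  shows "lat_index (lat v) M * lat_index M (qscale (of_nat t) ` lat v) = t ^ 4"
proof -
  have K: "add_subgroup (qscale (of_nat t) ` lat v)" unfolding qscale_lat by (rule add_subgroup_lat)
  have c: "card (coset (qscale (of_nat t) ` lat v) ` lat v) = t ^ 4"
    using lat_index_qscale[OF v t] unfolding lat_index_coset .
  then have fin: "finite (coset (qscale (of_nat t) ` lat v) ` lat v)"
    using t by (intro card_ge_0_finite) simp
  have "lat_index (lat v) (qscale (of_nat t) ` lat v) = lat_index (lat v) M * lat_index M (qscale (of_nat t) ` lat v)"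
    by (rule lat_index_tower[OF K M add_subgroup_lat tM MsubL fin])
  then show ?thesis using lat_index_qscale[OF v t] by simp
qed

lemma lat_index_coprime:
  assumes v: "qbasis v" and t: "t > 0" and M: "add_subgroup M" and tM: "qscale (of_nat t) ` lat v \<subseteq> M" and MsubL: "M \<subseteq> lat v"
    and q: "prime q" "\<not> q dvd t"
  shows "\<not> q dvd lat_index (lat v) M" "lat_index (lat v) M > 0"
proof -
  have e: "lat_index (lat v) M * lat_index M (qscale (of_nat t) ` lat v) = t ^ 4" using lat_index_between_qscale[OF v t M tM MsubL] .
  show "\<not> q dvd lat_index (lat v) M"
  proof
    assume "q dvd lat_index (lat v) M"
    then have "q dvd t ^ 4" using e by (metis dvd_mult2)
    then show False using q prime_dvd_power by blast
  qed
  show "lat_index (lat v) M > 0" using e t by (metis gr0I mult_is_0 power_not_zero less_not_refl2)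
qed

section \<open>Integrality in an order\<close>

locale quat_order =
  fixes a b :: rat and vo :: "nat \<Rightarrow> quat"
  assumes a_neg: "a < 0" and b_neg: "b < 0" and qbasis_vo: "qbasis vo"
    and one_in: "qone \<in> lat vo" and mul_closed: "\<And>x y. x \<in> lat vo \<Longrightarrow> y \<in> lat vo \<Longrightarrow> qmul a b x y \<in> lat vo"
begin

lemma lat_loc_mul:
  assumes q: "prime q" and x: "x \<in> lat_loc q vo" and y: "y \<in> lat_loc q vo"
  shows "qmul a b x y \<in> lat_loc q vo"
proof -
  obtain c where c: "\<forall>i<4. c i \<in> zloc q" "x = (\<Sum>i<4. qscale (c i) (vo i))" using x unfolding lat_loc_mem by blast
  obtain d where d: "\<forall>i<4. d i \<in> zloc q" "y = (\<Sum>i<4. qscale (d i) (vo i))" using y unfolding lat_loc_mem by blast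
  have "qmul a b x y = (\<Sum>i<4. qscale (c i) (qmul a b (vo i) y))"
    unfolding c(2) by (simp add: qmul_sum_left qmul_scale_left)
  also have "\<dots> = (\<Sum>i<4. \<Sum>j<4. qscale (c i * d j) (qmul a b (vo i) (vo j)))"
    unfolding d(2) by (simp add: qmul_sum_right qmul_scale_right qscale_sum_right)
  also have "\<dots> \<in> lat_loc q vo"
  proof (intro lat_loc_sum[OF q] lat_loc_scale[OF q] lat_subset_lat_loc[OF q])
    fix i j :: nat assume "i \<in> {..<4}" "j \<in> {..<4}"
    then show "c i * d j \<in> zloc q" "qmul a b (vo i) (vo j) \<in> lat vo"
      using c(1) d(1) zloc_mult[OF q] mul_closed lat_basis by auto
  qed
  finally show ?thesis .
qed

lemma qone_lat_loc: "prime q \<Longrightarrow> qone \<in> lat_loc q vo"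
  using lat_subset_lat_loc one_in by blast

lemma qpow_lat_loc: "prime q \<Longrightarrow> x \<in> lat_loc q vo \<Longrightarrow> qpow a b x n \<in> lat_loc q vo"
  by (induct n) (simp_all add: qone_lat_loc lat_loc_mul)

lemma qnrd_lat_loc_zloc:
  assumes q: "prime q" and o: "x \<in> lat_loc q vo"
  shows "qnrd a b x \<in> zloc q"
proof -
  obtain C :: int where C: "C > 0" "\<And>q w. prime q \<Longrightarrow> w \<in> lat_loc q vo \<Longrightarrow> of_int C * qnrd a b w \<in> zloc q"
    by (rule qnrd_lat_loc_bounded[where v = vo]) blast
  have "of_int C * qnrd a b x ^ k \<in> zloc q" for k
    using C(2)[OF q qpow_lat_loc[OF q o, of k]] by (simp only: qnrd_qpow)
  then show ?thesis using zloc_from_powers[OF q, of "of_int C"] C(1) by simp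
qed

lemma qtrd_lat_loc_zloc:
  assumes q: "prime q" and o: "x \<in> lat_loc q vo"
  shows "2 * q0 x \<in> zloc q"
proof (rule ccontr)
  assume "2 * q0 x \<notin> zloc q"
  then have t: "2 * q0 x \<noteq> 0" "pval q (2 * q0 x) < 0" using zloc_iff_pval[OF q] by auto
  define p where "p = (\<lambda>k. 2 * q0 (qpow a b x k))"
  have p: "p (Suc k) \<noteq> 0 \<and> pval q (p (Suc k)) = int (Suc k) * pval q (2 * q0 x)" for k
    by (rule pval_trace_recurrence[OF q t qnrd_lat_loc_zloc[OF q o]])
      (simp_all add: p_def qpow_rec algebra_simps del: qpow.simps(2), simp add: p_def)
  obtain D :: int where D: "D > 0" "\<And>q w. prime q \<Longrightarrow> w \<in> lat_loc q vo \<Longrightarrow> of_int D * q0 w \<in> zloc q"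
    by (rule lat_loc_linear_bounded[of q0 vo]) simp_all
  define k where "k = nat (pval q (of_int D))"
  have "of_int D * p (Suc k) \<in> zloc q"
    using zloc_mult[OF q zloc_int[OF q, of 2] D(2)[OF q qpow_lat_loc[OF q o, of "Suc k"]]]
    by (simp add: p_def mult_ac del: qpow.simps)
  moreover have "pval q (of_int D * p (Suc k)) = pval q (of_int D) + int (Suc k) * pval q (2 * q0 x)"
    using p[of k] D(1) q by (simp add: pval_mult)
  moreover have "int (Suc k) * pval q (2 * q0 x) \<le> - int (Suc k)"
    using mult_left_mono[of "pval q (2 * q0 x)" "- 1" "int (Suc k)"] t(2) by simp
  moreover have "pval q (of_int D) \<ge> 0" using D(1) q by (simp add: pval_of_int)
  ultimately show False using p[of k] D(1) zloc_iff_pval[OF q] unfolding k_def by auto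
qed

lemma qconj_lat_loc:
  assumes q: "prime q" and o: "x \<in> lat_loc q vo"
  shows "qconj x \<in> lat_loc q vo"
  unfolding qconj_eq_trace using qtrd_lat_loc_zloc[OF q o] o qone_lat_loc[OF q]
  by (intro lat_loc_diff[OF q] lat_loc_scale[OF q])

lemma qnrd_lat_Ints: "x \<in> lat vo \<Longrightarrow> qnrd a b x \<in> \<int>"
  using qnrd_lat_loc_zloc lat_subset_lat_loc Ints_if_zloc_all by blast

lemma qtrd_lat_Ints: "x \<in> lat vo \<Longrightarrow> 2 * q0 x \<in> \<int>"
  using qtrd_lat_loc_zloc lat_subset_lat_loc Ints_if_zloc_all by blast

lemma qconj_lat: assumes "x \<in> lat vo" shows "qconj x \<in> lat vo"
proof -
  obtain t where "2 * q0 x = of_int t" using qtrd_lat_Ints[OF assms] by (elim Ints_cases)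
  then have "qconj x = qscale (of_int t) qone - x" unfolding qconj_eq_trace by simp
  then show ?thesis using lat_diff lat_scale_int one_in assms by metis
qed

section \<open>The index of a principal left ideal\<close>

definition rmul :: "quat \<Rightarrow> quat \<Rightarrow> quat" where "rmul u = (\<lambda>y. qmul a b y u)"

definition rmul_index :: "quat \<Rightarrow> nat" where "rmul_index u = lat_index (lat vo) (rmul u ` lat vo)"

lemma rmul_add: "rmul u (x + y) = rmul u x + rmul u y"
  unfolding rmul_def by (simp add: qmul_add_left)

lemma rmul_lat: "rmul u ` lat vo = lat (rmul u \<circ> vo)"
  unfolding rmul_def by (rule qlinear_lat[OF qlinear_rmul])

lemma rmul_add_subgroup: "add_subgroup (rmul u ` lat vo)"
  unfolding rmul_lat by (rule add_subgroup_lat)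

lemma rmul_subset: "u \<in> lat vo \<Longrightarrow> rmul u ` lat vo \<subseteq> lat vo"
  unfolding rmul_def using mul_closed by blast

lemma rmul_qmul: "rmul (qmul a b u w) ` lat vo = rmul w ` (rmul u ` lat vo)"
  unfolding rmul_def image_image by (simp add: qmul_assoc)

lemma qnrd_lat_pos_nat:
  assumes u: "u \<in> lat vo" "u \<noteq> 0"
  obtains n :: nat where "n > 0" "qnrd a b u = of_nat n"
proof -
  obtain m where m: "qnrd a b u = of_int m" using qnrd_lat_Ints[OF u(1)] by (elim Ints_cases)
  have "qnrd a b u > 0" using qnrd_pos[OF a_neg b_neg u(2)] .
  then have "m > 0" using m by simp
  then show ?thesis using that[of "nat m"] m by simp
qed

lemma qscale_subset_rmul:
  assumes u: "u \<in> lat vo" and n: "qnrd a b u = of_nat n"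
  shows "qscale (of_nat n) ` lat vo \<subseteq> rmul u ` lat vo"
proof
  fix y assume "y \<in> qscale (of_nat n) ` lat vo"
  then obtain oo where oo: "oo \<in> lat vo" "y = qscale (of_nat n) oo" by blast
  have "qmul a b oo (qconj u) \<in> lat vo" using mul_closed[OF oo(1) qconj_lat[OF u]] .
  moreover have "rmul u (qmul a b oo (qconj u)) = y"
    unfolding rmul_def oo(2) by (simp add: qmul_assoc qmul_conj_left qmul_scale_right n)
  ultimately show "y \<in> rmul u ` lat vo" by (metis imageI)
qed

lemma rmul_index_pos:
  assumes u: "u \<in> lat vo" "u \<noteq> 0"
  shows "rmul_index u > 0" "finite (coset (rmul u ` lat vo) ` lat vo)"
proof -
  obtain n :: nat where n: "n > 0" "qnrd a b u = of_nat n" using qnrd_lat_pos_nat[OF u] by blast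
  have e: "lat_index (lat vo) (rmul u ` lat vo) * lat_index (rmul u ` lat vo) (qscale (of_nat n) ` lat vo) = n ^ 4"
    by (rule lat_index_between_qscale[OF qbasis_vo n(1) rmul_add_subgroup qscale_subset_rmul[OF u(1) n(2)] rmul_subset[OF u(1)]])
  then show "rmul_index u > 0" unfolding rmul_index_def using n(1)
    by (cases "lat_index (lat vo) (rmul u ` lat vo) = 0") simp_all
  then show "finite (coset (rmul u ` lat vo) ` lat vo)" unfolding rmul_index_def lat_index_coset by (rule card_ge_0_finite)
qed

lemma rmul_index_mult:
  assumes u: "u \<in> lat vo" "u \<noteq> 0" and w: "w \<in> lat vo" "w \<noteq> 0"
  shows "rmul_index (qmul a b u w) = rmul_index u * rmul_index w"
proof -
  have "qnrd a b (qmul a b u w) > 0" unfolding qnrd_mult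
    using qnrd_pos[OF a_neg b_neg u(2)] qnrd_pos[OF a_neg b_neg w(2)] by simp
  moreover have "qnrd a b 0 = 0" by (simp add: qnrd_def)
  ultimately have "qmul a b u w \<noteq> 0" by (metis less_irrefl)
  then have uw: "qmul a b u w \<in> lat vo" "qmul a b u w \<noteq> 0"
    using mul_closed[OF u(1) w(1)] by auto
  have sub1: "rmul w ` (rmul u ` lat vo) \<subseteq> rmul w ` lat vo" using rmul_subset[OF u(1)] by blast
  have K: "add_subgroup (rmul w ` (rmul u ` lat vo))" using rmul_add_subgroup[of "qmul a b u w"] unfolding rmul_qmul .
  have fin: "finite (coset (rmul w ` (rmul u ` lat vo)) ` lat vo)" using rmul_index_pos(2)[OF uw] unfolding rmul_qmul .
  have "rmul_index (qmul a b u w) = lat_index (lat vo) (rmul w ` (rmul u ` lat vo))" unfolding rmul_index_def rmul_qmul ..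
  also have "\<dots> = lat_index (lat vo) (rmul w ` lat vo) * lat_index (rmul w ` lat vo) (rmul w ` (rmul u ` lat vo))"
    by (rule lat_index_tower[OF K rmul_add_subgroup add_subgroup_lat sub1 rmul_subset[OF w(1)] fin])
  also have "lat_index (rmul w ` lat vo) (rmul w ` (rmul u ` lat vo)) = rmul_index u"
    unfolding rmul_index_def
  proof (rule lat_index_image)
    show "rmul w (x + y) = rmul w x + rmul w y" for x y by (rule rmul_add)
    show "inj (rmul w)" unfolding rmul_def by (rule qmul_right_inj[OF a_neg b_neg w(2)])
  qed
  finally show ?thesis unfolding rmul_index_def by simp
qed

lemma rmul_index_scalar:
  assumes n: "n > 0"
  shows "rmul_index (qscale (of_nat n) qone) = n ^ 4"
proof -
  have "rmul (qscale (of_nat n) qone) = qscale (of_nat n)" unfolding rmul_def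
    by (rule ext) (simp add: qmul_scale_right)
  then show ?thesis unfolding rmul_index_def using lat_index_qscale[OF qbasis_vo n] by simp
qed

lemma rmul_index_qnrd:
  assumes u: "u \<in> lat vo" "u \<noteq> 0" and n: "qnrd a b u = of_nat n"
  shows "rmul_index u = n ^ 2"
proof -
  have n0: "n > 0" using qnrd_pos[OF a_neg b_neg u(2)] n by simp
  have cu: "qconj u \<in> lat vo" "qconj u \<noteq> 0" using qconj_lat[OF u(1)] u(2) qconj_zero_iff by auto
  obtain w0 where w0: "w0 \<noteq> 0" "qmul a b w0 u = qmul a b (qconj u) w0" using qconj_intertwiner_exists[OF a_neg b_neg] by blast
  obtain s :: int where s: "s > 0" "qscale (of_int s) w0 \<in> lat vo" using qbasis_clear_denom[OF qbasis_vo] by blast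
  define w where "w = qscale (of_int s) w0"
  have w: "w \<in> lat vo" "w \<noteq> 0" unfolding w_def using s w0(1) qscale_zero_iff[of "of_int s" w0] by auto
  have wu: "qmul a b w u = qmul a b (qconj u) w"
    unfolding w_def by (simp add: qmul_scale_left qmul_scale_right w0(2))
  have "rmul_index w * rmul_index u = rmul_index (qconj u) * rmul_index w"
    using rmul_index_mult[OF w u] rmul_index_mult[OF cu w] wu by (simp only:)
  then have eq: "rmul_index u = rmul_index (qconj u)" using rmul_index_pos(1)[OF w] by simp
  have "rmul_index u * rmul_index (qconj u) = rmul_index (qmul a b u (qconj u))" using rmul_index_mult[OF u cu] by simp
  also have "qmul a b u (qconj u) = qscale (of_nat n) qone" by (simp add: qmul_conj_right n)
  also have "rmul_index (qscale (of_nat n) qone) = n ^ 4" using rmul_index_scalar[OF n0] .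
  finally have "rmul_index u * rmul_index u = n ^ 4" using eq by simp
  moreover have "(n ^ 2) ^ 2 = n ^ 4" by (simp add: power_mult[symmetric])
  ultimately have H: "rmul_index u ^ 2 = (n ^ 2) ^ 2" by (simp add: power2_eq_square)
  show ?thesis by (rule power_eq_imp_eq_base[OF H]) simp_all
qed

section \<open>Locally principal ideals\<close>

definition loc_ideal :: "nat \<Rightarrow> quat \<Rightarrow> quat set" where
  "loc_ideal q x = (\<lambda>oo. qmul a b oo x) ` lat_loc q vo"

definition ideal_basis :: "(nat \<Rightarrow> quat) \<Rightarrow> bool" where
  "ideal_basis va \<longleftrightarrow> qbasis va \<and> (\<forall>q. prime q \<longrightarrow> (\<exists>x. x \<noteq> 0 \<and> lat_loc q va = loc_ideal q x))"

lemma ideal_basis_qbasis: "ideal_basis va \<Longrightarrow> qbasis va"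
  unfolding ideal_basis_def by blast

lemma ideal_basis_loc_gen:
  assumes "ideal_basis va" "prime q"
  obtains x where "x \<noteq> 0" "lat_loc q va = loc_ideal q x"
  using assms unfolding ideal_basis_def by blast

lemma left_ideal_obtain_basis:
  assumes "left_ideal a b (lat vo) L"
  obtains va where "L = lat va" "ideal_basis va"
proof -
  obtain va where va: "qbasis va" "L = lat va" using assms unfolding left_ideal_def is_lattice_iff by blast
  have "ideal_basis va" unfolding ideal_basis_def
  proof (intro conjI allI impI)
    show "qbasis va" by (rule va(1))
    fix q :: nat assume q: "prime q"
    obtain x where x: "qunit a b x" "loc_span q L = {qmul a b y x | y. y \<in> loc_span q (lat vo)}"
      using assms q unfolding left_ideal_def by blast
    have "lat_loc q va = loc_ideal q x"
      using x(2) unfolding va(2) loc_span_lat[OF q va(1)] loc_span_lat[OF q qbasis_vo] loc_ideal_def by blast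
    then show "\<exists>x. x \<noteq> 0 \<and> lat_loc q va = loc_ideal q x" using x(1) qunit_iff[OF a_neg b_neg] by blast
  qed
  then show ?thesis using that va(2) by blast
qed

lemma ideal_basis_left_ideal:
  assumes "ideal_basis va"
  shows "left_ideal a b (lat vo) (lat va)"
  unfolding left_ideal_def
proof (intro conjI allI impI)
  show "is_lattice (lat va)" unfolding is_lattice_iff using ideal_basis_qbasis[OF assms] by blast
  fix q :: nat assume q: "prime q"
  obtain x where x: "x \<noteq> 0" "lat_loc q va = loc_ideal q x" using ideal_basis_loc_gen[OF assms q] by blast
  have "loc_span q (lat va) = {qmul a b y x | y. y \<in> loc_span q (lat vo)}"
    unfolding loc_span_lat[OF q ideal_basis_qbasis[OF assms]] loc_span_lat[OF q qbasis_vo] x(2) loc_ideal_def by blast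
  then show "\<exists>x. qunit a b x \<and> loc_span q (lat va) = {qmul a b y x | y. y \<in> loc_span q (lat vo)}"
    using x(1) qunit_iff[OF a_neg b_neg] by blast
qed

lemma loc_ideal_mem: "h \<in> loc_ideal q x \<longleftrightarrow> (\<exists>oo\<in>lat_loc q vo. h = qmul a b oo x)"
  unfolding loc_ideal_def by blast

lemma loc_ideal_mul:
  assumes q: "prime q" and oo: "oo \<in> lat_loc q vo" and h: "h \<in> loc_ideal q x"
  shows "qmul a b oo h \<in> loc_ideal q x"
proof -
  obtain o' where o': "o' \<in> lat_loc q vo" "h = qmul a b o' x" using h unfolding loc_ideal_mem by blast
  have "qmul a b oo h = qmul a b (qmul a b oo o') x" unfolding o'(2) by (simp add: qmul_assoc)
  moreover have "qmul a b oo o' \<in> lat_loc q vo" using lat_loc_mul[OF q oo o'(1)] .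
  ultimately show ?thesis unfolding loc_ideal_mem by blast
qed

lemma loc_ideal_gen: "prime q \<Longrightarrow> x \<in> loc_ideal q x"
  unfolding loc_ideal_mem using qone_lat_loc by (metis qmul_one_left)

lemma loc_ideal_scale_unit:
  assumes q: "prime q" and s: "s \<noteq> 0" "1 / s \<in> zloc q" "s \<in> zloc q"
  shows "loc_ideal q (qscale s x) = loc_ideal q x"
proof
  show "loc_ideal q (qscale s x) \<subseteq> loc_ideal q x"
  proof
    fix h assume "h \<in> loc_ideal q (qscale s x)"
    then obtain oo where oo: "oo \<in> lat_loc q vo" "h = qmul a b oo (qscale s x)" unfolding loc_ideal_mem by blast
    have "h = qmul a b (qscale s oo) x" unfolding oo(2) by (simp add: qmul_scale_left qmul_scale_right)
    moreover have "qscale s oo \<in> lat_loc q vo" using lat_loc_scale[OF q s(3) oo(1)] .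
    ultimately show "h \<in> loc_ideal q x" unfolding loc_ideal_mem by blast
  qed
  show "loc_ideal q x \<subseteq> loc_ideal q (qscale s x)"
  proof
    fix h assume "h \<in> loc_ideal q x"
    then obtain oo where oo: "oo \<in> lat_loc q vo" "h = qmul a b oo x" unfolding loc_ideal_mem by blast
    have "h = qmul a b (qscale (1 / s) oo) (qscale s x)" unfolding oo(2) using s(1)
      by (simp add: qmul_scale_left qmul_scale_right)
    moreover have "qscale (1 / s) oo \<in> lat_loc q vo" using lat_loc_scale[OF q s(2) oo(1)] .
    ultimately show "h \<in> loc_ideal q (qscale s x)" unfolding loc_ideal_mem by blast
  qed
qed

lemma loc_ideal_scale_int:
  assumes q: "prime q" and s: "s > 0" "\<not> int q dvd s"
  shows "loc_ideal q (qscale (of_int s) x) = loc_ideal q x"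
  using loc_ideal_scale_unit[OF q] zloc_inverse_int[OF q s(2)] q s(1) by simp

lemma ideal_basis_module:
  assumes L: "ideal_basis va" and oo: "oo \<in> lat vo" and h: "h \<in> lat va"
  shows "qmul a b oo h \<in> lat va"
proof (rule lat_local_global)
  show "qbasis va" using L unfolding ideal_basis_def by blast
  fix q :: nat assume q: "prime q"
  obtain x where x: "lat_loc q va = loc_ideal q x" using L q unfolding ideal_basis_def by blast
  have "h \<in> loc_ideal q x" using lat_subset_lat_loc[OF q h] x by simp
  then have "qmul a b oo h \<in> loc_ideal q x" using loc_ideal_mul[OF q lat_subset_lat_loc[OF q oo]] by blast
  then show "qmul a b oo h \<in> lat_loc q va" using x by simp
qed

lemma rmul_subset_ideal:
  assumes L: "ideal_basis va" and x: "x \<in> lat va"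
  shows "rmul x ` lat vo \<subseteq> lat va"
  unfolding rmul_def using ideal_basis_module[OF L _ x] by blast

lemma loc_gen_coprime_scale:
  assumes q: "prime q" and gen: "lat_loc q va = loc_ideal q x"
  obtains t :: nat where "t > 0" "\<not> q dvd t" "qscale (of_nat t) ` lat va \<subseteq> rmul x ` lat vo"
proof -
  have "\<forall>i<4. \<exists>oo. oo \<in> lat_loc q vo \<and> va i = qmul a b oo x"
  proof (intro allI impI)
    fix i :: nat assume "i < 4"
    then have "va i \<in> loc_ideal q x" using gen lat_subset_lat_loc[OF q lat_basis] by blast
    then show "\<exists>oo. oo \<in> lat_loc q vo \<and> va i = qmul a b oo x" unfolding loc_ideal_mem by blast
  qed
  then obtain oo where oo: "\<forall>i<4. oo i \<in> lat_loc q vo \<and> va i = qmul a b (oo i) x" by metis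
  obtain t :: nat where t: "t > 0" "\<not> q dvd t" "\<forall>i<4. qscale (of_nat t) (oo i) \<in> lat vo"
    using lat_loc_clear_denoms[OF q, of 4 oo vo] oo by auto
  have sub: "qscale (of_nat t) ` lat va \<subseteq> rmul x ` lat vo"
  proof -
    have "qscale (of_nat t) ` lat va = lat (qscale (of_nat t) \<circ> va)" by (rule qscale_lat)
    also have "\<dots> \<subseteq> rmul x ` lat vo"
    proof
      fix h assume "h \<in> lat (qscale (of_nat t) \<circ> va)"
      then obtain n where n: "h = (\<Sum>i<4. qscale (of_int (n i)) ((qscale (of_nat t) \<circ> va) i))" unfolding lat_mem by blast
      have "h = (\<Sum>i<4. qscale (of_int (n i)) (rmul x (qscale (of_nat t) (oo i))))"
        unfolding n by (rule sum.cong) (auto simp: oo rmul_def qmul_scale_left)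
      also have "\<dots> = rmul x (\<Sum>i<4. qscale (of_int (n i)) (qscale (of_nat t) (oo i)))"
        unfolding rmul_def by (simp add: qmul_sum_left qmul_scale_left)
      finally have hh: "h = rmul x (\<Sum>i<4. qscale (of_int (n i)) (qscale (of_nat t) (oo i)))" .
      have "(\<Sum>i<4. qscale (of_int (n i)) (qscale (of_nat t) (oo i))) \<in> lat vo"
        using t(3) lat_scale_int by (intro lat_sum) blast
      then show "h \<in> rmul x ` lat vo" unfolding hh by (rule imageI)
    qed
    finally show ?thesis .
  qed
  then show ?thesis using that t by blast
qed

section \<open>Norms and indices of ideals\<close>

lemma pval_lat_norm_ideal:
  assumes L: "ideal_basis va" and q: "prime q" and gen: "lat_loc q va = loc_ideal q x" and x: "x \<noteq> 0"
  shows "pval q (lat_norm a b (lat va)) = pval q (qnrd a b x)"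
proof -
  have va: "qbasis va" using ideal_basis_qbasis[OF L] .
  define N where "N = lat_norm a b (lat va)"
  have N: "N > 0" using lat_norm_char[OF a_neg b_neg va] unfolding N_def by simp
  have nx: "qnrd a b x > 0" using qnrd_pos[OF a_neg b_neg x] .
  have "x \<in> lat_loc q va" using loc_ideal_gen[OF q] gen by simp
  then have "qnrd a b x / N \<in> zloc q" using qnrd_div_lat_norm_zloc[OF a_neg b_neg va q] unfolding N_def by blast
  then have "pval q (qnrd a b x / N) \<ge> 0" using pval_nonneg_zloc[OF q] nx N by simp
  then have ge: "pval q (qnrd a b x) \<ge> pval q N" using nx N q by (simp add: pval_divide)
  obtain w where w: "w \<in> lat va" "qnrd a b w \<noteq> 0" "N / qnrd a b w \<in> zloc q"
    using lat_norm_div_qnrd_zloc[OF a_neg b_neg va q] unfolding N_def by blast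
  have "w \<in> loc_ideal q x" using lat_subset_lat_loc[OF q w(1)] gen by simp
  then obtain oo where oo: "oo \<in> lat_loc q vo" "w = qmul a b oo x" unfolding loc_ideal_mem by blast
  have nw: "qnrd a b w = qnrd a b oo * qnrd a b x" unfolding oo(2) by (rule qnrd_mult)
  have no: "qnrd a b oo \<noteq> 0" using w(2) nw by simp
  have "pval q (qnrd a b oo) \<ge> 0" using pval_nonneg_zloc[OF q qnrd_lat_loc_zloc[OF q oo(1)] no] .
  moreover have "pval q (N / qnrd a b w) \<ge> 0" using pval_nonneg_zloc[OF q w(3)] N w(2) by simp
  ultimately have "pval q N \<ge> pval q (qnrd a b x)" using q N w(2) no nx unfolding nw
    by (simp add: pval_divide pval_mult)
  then show ?thesis using ge unfolding N_def by simp
qed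

lemma ideal_basis_lat_gen:
  assumes A: "ideal_basis va" and q: "prime q"
  obtains x where "x \<in> lat va" "x \<noteq> 0" "lat_loc q va = loc_ideal q x"
proof -
  obtain x where x: "x \<noteq> 0" "lat_loc q va = loc_ideal q x" using ideal_basis_loc_gen[OF A q] by blast
  obtain s :: int where s: "s > 0" "\<not> int q dvd s" "qscale (of_int s) x \<in> lat va"
    using lat_loc_clear_denom[OF q, of x va] loc_ideal_gen[OF q, of x] x(2) by auto
  have "qscale (of_int s) x \<noteq> 0" using s(1) x(1) qscale_zero_iff[of "of_int s" x] by simp
  then show ?thesis using that s(3) x(2) loc_ideal_scale_int[OF q s(1,2)] by simp
qed

lemma lat_index_rmul_gen:
  assumes A: "ideal_basis va" and x: "x \<in> lat va" and q: "prime q"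
    and gen: "lat_loc q va = loc_ideal q x"
  shows "lat_index (lat va) (rmul x ` lat vo) > 0" "\<not> q dvd lat_index (lat va) (rmul x ` lat vo)"
proof -
  obtain t :: nat where t: "t > 0" "\<not> q dvd t" "qscale (of_nat t) ` lat va \<subseteq> rmul x ` lat vo"
    using loc_gen_coprime_scale[OF q gen] by blast
  show "lat_index (lat va) (rmul x ` lat vo) > 0" "\<not> q dvd lat_index (lat va) (rmul x ` lat vo)"
    using lat_index_coprime[OF ideal_basis_qbasis[OF A] t(1) rmul_add_subgroup t(3)
        rmul_subset_ideal[OF A x] q t(2)] by simp_all
qed

lemma qscale_subset_rmul_qmul:
  assumes L: "qscale (of_nat t) ` L \<subseteq> rmul x ` lat vo" and u: "u \<in> lat vo" and nu: "qnrd a b u = of_nat nu"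
  shows "qscale (of_nat (t * nu)) ` L \<subseteq> rmul (qmul a b u x) ` lat vo"
proof
  fix h assume "h \<in> qscale (of_nat (t * nu)) ` L"
  then obtain h0 where h0: "h0 \<in> L" "h = qscale (of_nat nu) (qscale (of_nat t) h0)"
    by (auto simp: mult.commute)
  obtain o1 where o1: "o1 \<in> lat vo" "qscale (of_nat t) h0 = rmul x o1" using L h0(1) by blast
  obtain o2 where o2: "o2 \<in> lat vo" "qscale (of_nat nu) o1 = rmul u o2"
    using qscale_subset_rmul[OF u nu] o1(1) by blast
  have "h = rmul x (qscale (of_nat nu) o1)" unfolding h0(2) o1(2) rmul_def by (simp add: qmul_scale_left)
  then have "h = rmul x (rmul u o2)" unfolding o2(2) .
  then show "h \<in> rmul (qmul a b u x) ` lat vo" unfolding rmul_qmul using o2(1) by blast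
qed

text \<open>The core computation: if A_q = O_q x and B_q = O_q u x, then the q-parts of [A : B] and of
  [O x : O u x] = [O : O u] = nrd(u)^2 agree, because A / O x and B / O u x have order prime to q.\<close>

lemma pval_lat_index_rmul:
  assumes A: "ideal_basis va" and B: "ideal_basis vb" and BA: "lat vb \<subseteq> lat va" and q: "prime q"
    and x: "x \<in> lat va" "x \<noteq> 0" "lat_loc q va = loc_ideal q x"
    and u: "u \<in> lat vo" "u \<noteq> 0"
    and ux: "qmul a b u x \<in> lat vb" "lat_loc q vb = loc_ideal q (qmul a b u x)"
  shows "lat_index (lat va) (lat vb) > 0 \<and>
    pval q (of_nat (lat_index (lat va) (lat vb))) = 2 * pval q (qnrd a b u)"
proof -
  obtain nu :: nat where nu: "nu > 0" "qnrd a b u = of_nat nu" using qnrd_lat_pos_nat[OF u] by blast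
  define K where "K = rmul (qmul a b u x) ` lat vo"
  have K_rmul: "K = rmul x ` rmul u ` lat vo" unfolding K_def by (rule rmul_qmul)
  have K: "add_subgroup K" unfolding K_def by (rule rmul_add_subgroup)
  have KOx: "K \<subseteq> rmul x ` lat vo" unfolding K_rmul using rmul_subset[OF u(1)] by blast
  have OxA: "rmul x ` lat vo \<subseteq> lat va" by (rule rmul_subset_ideal[OF A x(1)])
  have KB: "K \<subseteq> lat vb" unfolding K_def by (rule rmul_subset_ideal[OF B ux(1)])
  obtain t :: nat where t: "t > 0" "qscale (of_nat t) ` lat va \<subseteq> rmul x ` lat vo"
    using loc_gen_coprime_scale[OF q x(3)] by blast
  have tK: "qscale (of_nat (t * nu)) ` lat va \<subseteq> K"
    unfolding K_def by (rule qscale_subset_rmul_qmul[OF t(2) u(1) nu(2)])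
  have "lat_index (lat va) K > 0"
    using lat_index_between_qscale[OF ideal_basis_qbasis[OF A] _ K tK] KB BA t(1) nu(1)
    by (metis mult_is_0 neq0_conv power_not_zero subset_trans)
  then have fin: "finite (coset K ` lat va)" unfolding lat_index_coset by (rule card_ge_0_finite)
  have "lat_index (rmul x ` lat vo) K = rmul_index u"
    unfolding K_rmul rmul_index_def
    by (rule lat_index_image[OF rmul_add qmul_right_inj[OF a_neg b_neg x(2), folded rmul_def]])
  define iAO where "iAO = lat_index (lat va) (rmul x ` lat vo)"
  define iAB where "iAB = lat_index (lat va) (lat vb)"
  define iBK where "iBK = lat_index (lat vb) K"
  have AO: "iAO > 0" "\<not> q dvd iAO" unfolding iAO_def by (rule lat_index_rmul_gen[OF A x(1) q x(3)])+
  have BK: "iBK > 0" "\<not> q dvd iBK" unfolding iBK_def K_def by (rule lat_index_rmul_gen[OF B ux(1) q ux(2)])+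
  have eq: "iAO * nu ^ 2 = iAB * iBK"
    using lat_index_tower[OF K rmul_add_subgroup add_subgroup_lat KOx OxA fin]
      lat_index_tower[OF K add_subgroup_lat add_subgroup_lat KB BA fin]
      rmul_index_qnrd[OF u nu(2)] \<open>lat_index (rmul x ` lat vo) K = rmul_index u\<close>
    unfolding iAO_def iAB_def iBK_def by simp
  have AB: "iAB > 0" using eq AO(1) nu(1) by (cases "iAB = 0") simp_all
  have "pval q (of_nat (iAO * nu ^ 2)) = pval q (of_nat iAO) + 2 * pval q (of_nat nu)"
    using AO(1) nu(1) q by (simp add: pval_mult pval_power)
  moreover have "pval q (of_nat (iAB * iBK)) = pval q (of_nat iAB) + pval q (of_nat iBK)"
    using AB BK(1) q by (simp add: pval_mult)
  ultimately show ?thesis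
    using eq AB nu(2) pval_of_nat_coprime[OF q AO(2)] pval_of_nat_coprime[OF q BK(2)]
    unfolding iAB_def by simp
qed

lemma pval_lat_index_ideal:
  assumes A: "ideal_basis va" and B: "ideal_basis vb" and BA: "lat vb \<subseteq> lat va" and q: "prime q"
  shows "lat_index (lat va) (lat vb) > 0 \<and>
    pval q (of_nat (lat_index (lat va) (lat vb))) = pval q ((lat_norm a b (lat vb) / lat_norm a b (lat va)) ^ 2)"
proof -
  obtain x where x: "x \<in> lat va" "x \<noteq> 0" "lat_loc q va = loc_ideal q x"
    using ideal_basis_lat_gen[OF A q] by blast
  obtain y where y: "y \<in> lat vb" "y \<noteq> 0" "lat_loc q vb = loc_ideal q y"
    using ideal_basis_lat_gen[OF B q] by blast
  have "y \<in> loc_ideal q x" using lat_loc_mono[OF q BA] lat_subset_lat_loc[OF q y(1)] x(3) by blast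
  then obtain z where z: "z \<in> lat_loc q vo" "y = qmul a b z x" unfolding loc_ideal_mem by blast
  have z0: "z \<noteq> 0" using y(2) z(2) by auto
  obtain s :: int where s: "s > 0" "\<not> int q dvd s" "qscale (of_int s) z \<in> lat vo"
    using lat_loc_clear_denom[OF q z(1)] by blast
  define u where "u = qscale (of_int s) z"
  have u: "u \<in> lat vo" "u \<noteq> 0" unfolding u_def using s z0 qscale_zero_iff[of "of_int s" z] by auto
  have ux: "qmul a b u x = qscale (of_int s) y" unfolding u_def z(2) by (simp add: qmul_scale_left)
  have "qmul a b u x \<in> lat vb" "lat_loc q vb = loc_ideal q (qmul a b u x)"
    unfolding ux using lat_scale_int[OF y(1)] y(3) loc_ideal_scale_int[OF q s(1,2)] by simp_all
  then have idx: "lat_index (lat va) (lat vb) > 0 \<and>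
      pval q (of_nat (lat_index (lat va) (lat vb))) = 2 * pval q (qnrd a b u)"
    by (rule pval_lat_index_rmul[OF A B BA q x u])
  have nz: "qnrd a b z \<noteq> 0" "qnrd a b x \<noteq> 0"
    using qnrd_pos[OF a_neg b_neg z0] qnrd_pos[OF a_neg b_neg x(2)] by simp_all
  have "pval q (qnrd a b u) = pval q (qnrd a b z)"
    using q s(1) nz pval_of_int_coprime[OF q s(2)] by (simp add: u_def qnrd_scale pval_mult pval_power)
  moreover have "pval q (lat_norm a b (lat va)) = pval q (qnrd a b x)"
    by (rule pval_lat_norm_ideal[OF A q x(3) x(2)])
  moreover have "pval q (lat_norm a b (lat vb)) = pval q (qnrd a b z) + pval q (qnrd a b x)"
    using pval_lat_norm_ideal[OF B q y(3) y(2)] q nz by (simp add: z(2) qnrd_mult pval_mult)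
  moreover have "lat_norm a b (lat va) > 0" "lat_norm a b (lat vb) > 0"
    using lat_norm_char[OF a_neg b_neg] ideal_basis_qbasis A B by auto
  ultimately show ?thesis using idx q by (simp add: pval_power pval_divide)
qed

lemma lat_index_ideal_eq:
  assumes A: "ideal_basis va" and B: "ideal_basis vb" and BA: "lat vb \<subseteq> lat va"
  shows "of_nat (lat_index (lat va) (lat vb)) = (lat_norm a b (lat vb) / lat_norm a b (lat va)) ^ 2"
proof (rule rat_eq_if_pval_eq)
  show "of_nat (lat_index (lat va) (lat vb)) > (0::rat)" using pval_lat_index_ideal[OF A B BA two_is_prime_nat] by simp
  have "lat_norm a b (lat vb) > 0" "lat_norm a b (lat va) > 0"
    using lat_norm_char[OF a_neg b_neg] ideal_basis_qbasis A B by auto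
  then show "(lat_norm a b (lat vb) / lat_norm a b (lat va)) ^ 2 > 0" by simp
  show "pval q (of_nat (lat_index (lat va) (lat vb))) = pval q ((lat_norm a b (lat vb) / lat_norm a b (lat va)) ^ 2)"
    if "prime q" for q using pval_lat_index_ideal[OF A B BA that] by simp
qed

lemma lat_norm_eq_iff_lat_index:
  assumes A: "ideal_basis va" and B: "ideal_basis vb" and BA: "lat vb \<subseteq> lat va"
  shows "lat_norm a b (lat vb) = of_nat m * lat_norm a b (lat va) \<longleftrightarrow> lat_index (lat va) (lat vb) = m ^ 2"
proof -
  have NA: "lat_norm a b (lat va) > 0" and NB: "lat_norm a b (lat vb) > 0"
    using lat_norm_char[OF a_neg b_neg] ideal_basis_qbasis A B by auto
  have mi: "of_nat (lat_index (lat va) (lat vb)) = (lat_norm a b (lat vb) / lat_norm a b (lat va)) ^ 2"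
    by (rule lat_index_ideal_eq[OF A B BA])
  show ?thesis
  proof
    assume "lat_norm a b (lat vb) = of_nat m * lat_norm a b (lat va)"
    then have "lat_norm a b (lat vb) / lat_norm a b (lat va) = of_nat m" using NA by simp
    then have "(of_nat (lat_index (lat va) (lat vb)) :: rat) = of_nat (m ^ 2)" using mi by simp
    then show "lat_index (lat va) (lat vb) = m ^ 2" by (simp only: of_nat_eq_iff)
  next
    assume "lat_index (lat va) (lat vb) = m ^ 2"
    then have H: "(lat_norm a b (lat vb) / lat_norm a b (lat va)) ^ 2 = (of_nat m) ^ 2" using mi by simp
    have "lat_norm a b (lat vb) / lat_norm a b (lat va) = of_nat m"
      by (rule power_eq_imp_eq_base[OF H]) (use NA NB in simp_all)
    then show "lat_norm a b (lat vb) = of_nat m * lat_norm a b (lat va)" using NA by (simp add: field_simps)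
  qed
qed

section \<open>The sets T_m(A)\<close>

text \<open>The witness is (m / nrd z) conj z, which lies in O_q because m / nrd z is a q-adic unit.\<close>

lemma lat_loc_scaled_conj:
  assumes q: "prime q" and z: "z \<in> lat_loc q vo" "z \<noteq> 0" and m: "m > 0"
    and v: "pval q (qnrd a b z) = pval q (of_nat m)"
  obtains w where "w \<in> lat_loc q vo" "\<And>x. qmul a b w (qmul a b z x) = qscale (of_nat m) x"
proof
  define w where "w = qscale (of_nat m / qnrd a b z) (qconj z)"
  have nz: "qnrd a b z \<noteq> 0" using qnrd_pos[OF a_neg b_neg z(2)] by simp
  then have "pval q (of_nat m / qnrd a b z) = 0" using q m v by (simp add: pval_divide)
  then have "of_nat m / qnrd a b z \<in> zloc q" using zloc_iff_pval[OF q] by simp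
  then show "w \<in> lat_loc q vo" unfolding w_def by (rule lat_loc_scale[OF q _ qconj_lat_loc[OF q z(1)]])
  fix x
  have "qmul a b w (qmul a b z x) = qscale (of_nat m / qnrd a b z * qnrd a b z) x"
    unfolding w_def by (simp add: qmul_scale_left qmul_conj_left flip: qmul_assoc)
  then show "qmul a b w (qmul a b z x) = qscale (of_nat m) x" using nz by simp
qed

lemma pval_qnrd_gen_lat_norm_ratio:
  assumes A: "ideal_basis va" and B: "ideal_basis vb" and q: "prime q" and m: "m > 0"
    and N: "lat_norm a b (lat vb) = of_nat m * lat_norm a b (lat va)"
    and x: "x \<noteq> 0" "lat_loc q va = loc_ideal q x" and y: "y \<noteq> 0" "lat_loc q vb = loc_ideal q y"
  shows "pval q (qnrd a b y) = pval q (of_nat m) + pval q (qnrd a b x)"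
proof -
  have "lat_norm a b (lat va) > 0" using lat_norm_char[OF a_neg b_neg ideal_basis_qbasis[OF A]] by simp
  then show ?thesis
    using pval_lat_norm_ideal[OF B q y(2,1)] pval_lat_norm_ideal[OF A q x(2,1)] N q m
    by (simp add: pval_mult)
qed

lemma qscale_subset_of_lat_norm:
  assumes A: "ideal_basis va" and B: "ideal_basis vb" and BA: "lat vb \<subseteq> lat va" and m: "m > 0"
    and N: "lat_norm a b (lat vb) = of_nat m * lat_norm a b (lat va)"
  shows "qscale (of_nat m) ` lat va \<subseteq> lat vb"
proof
  fix h' assume "h' \<in> qscale (of_nat m) ` lat va"
  then obtain h where h: "h \<in> lat va" "h' = qscale (of_nat m) h" by blast
  show "h' \<in> lat vb"
  proof (rule lat_local_global[OF ideal_basis_qbasis[OF B]])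
    fix q :: nat assume q: "prime q"
    obtain x where x: "x \<noteq> 0" "lat_loc q va = loc_ideal q x" using ideal_basis_loc_gen[OF A q] by blast
    obtain y where y: "y \<noteq> 0" "lat_loc q vb = loc_ideal q y" using ideal_basis_loc_gen[OF B q] by blast
    have "y \<in> lat_loc q va" using lat_loc_mono[OF q BA] loc_ideal_gen[OF q, of y] y(2) by blast
    then obtain z where z: "z \<in> lat_loc q vo" "y = qmul a b z x" unfolding x(2) loc_ideal_mem by blast
    have z0: "z \<noteq> 0" using y(1) z(2) by auto
    have nz: "qnrd a b z \<noteq> 0" "qnrd a b x \<noteq> 0"
      using qnrd_pos[OF a_neg b_neg z0] qnrd_pos[OF a_neg b_neg x(1)] by simp_all
    have "pval q (qnrd a b z) = pval q (of_nat m)"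
      using pval_qnrd_gen_lat_norm_ratio[OF A B q m N x y] q nz by (simp add: z(2) qnrd_mult pval_mult)
    then obtain w where w: "w \<in> lat_loc q vo" "\<And>x. qmul a b w (qmul a b z x) = qscale (of_nat m) x"
      using lat_loc_scaled_conj[OF q z(1) z0 m] by blast
    obtain o1 where o1: "o1 \<in> lat_loc q vo" "h = qmul a b o1 x"
      using lat_subset_lat_loc[OF q h(1)] unfolding x(2) loc_ideal_mem by blast
    have "h' = qmul a b (qmul a b o1 w) y"
      unfolding h(2) o1(2) qmul_assoc z(2) w(2) by (simp add: qmul_scale_right)
    then show "h' \<in> lat_loc q vb" unfolding y(2) loc_ideal_mem using lat_loc_mul[OF q o1(1) w(1)] by blast
  qed
qed

lemma subset_of_qscale_subset:
  assumes A: "ideal_basis va" and B: "ideal_basis vb" and mAB: "qscale (of_nat m) ` lat va \<subseteq> lat vb"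
    and m: "m > 0" and N: "lat_norm a b (lat vb) = of_nat m * lat_norm a b (lat va)"
  shows "lat vb \<subseteq> lat va"
proof
  fix h assume h: "h \<in> lat vb"
  show "h \<in> lat va"
  proof (rule lat_local_global[OF ideal_basis_qbasis[OF A]])
    fix q :: nat assume q: "prime q"
    obtain x where x: "x \<noteq> 0" "lat_loc q va = loc_ideal q x" using ideal_basis_loc_gen[OF A q] by blast
    obtain y where y: "y \<noteq> 0" "lat_loc q vb = loc_ideal q y" using ideal_basis_loc_gen[OF B q] by blast
    have "qscale (of_nat m) ` lat_loc q va = lat_loc q (qscale (of_nat m) \<circ> va)"
      by (rule qlinear_lat_loc[OF qlinear_scale])
    also have "\<dots> \<subseteq> lat_loc q vb" using lat_loc_mono[OF q] mAB qscale_lat[of "of_nat m" va] by simp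
    finally have "qscale (of_nat m) x \<in> lat_loc q vb" using loc_ideal_gen[OF q, of x] x(2) by blast
    then obtain z where z: "z \<in> lat_loc q vo" "qscale (of_nat m) x = qmul a b z y"
      unfolding y(2) loc_ideal_mem by blast
    have z0: "z \<noteq> 0" using x(1) z(2) m qscale_zero_iff[of "of_nat m" x] by auto
    have nz: "qnrd a b z \<noteq> 0" "qnrd a b x \<noteq> 0" "qnrd a b y \<noteq> 0"
      using qnrd_pos[OF a_neg b_neg z0] qnrd_pos[OF a_neg b_neg x(1)] qnrd_pos[OF a_neg b_neg y(1)]
      by simp_all
    have "pval q (of_nat m ^ 2 * qnrd a b x) = pval q (qnrd a b z * qnrd a b y)"
      using arg_cong[OF z(2), of "qnrd a b"] by (simp add: qnrd_scale qnrd_mult)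
    then have "2 * pval q (of_nat m) + pval q (qnrd a b x) = pval q (qnrd a b z) + pval q (qnrd a b y)"
      using q m nz by (simp add: pval_mult pval_power)
    then have "pval q (qnrd a b z) = pval q (of_nat m)"
      using pval_qnrd_gen_lat_norm_ratio[OF A B q m N x y] by simp
    then obtain w where w: "w \<in> lat_loc q vo" "\<And>x. qmul a b w (qmul a b z x) = qscale (of_nat m) x"
      using lat_loc_scaled_conj[OF q z(1) z0 m] by blast
    have "qscale (of_nat m) (qmul a b w x) = qscale (of_nat m) y"
      using w(2)[of y] unfolding z(2)[symmetric] by (simp add: qmul_scale_right)
    then have wx: "qmul a b w x = y"
      using m qscale_zero_iff[of "of_nat m" "qmul a b w x - y"] by (simp add: qscale_diff_right)
    obtain o1 where o1: "o1 \<in> lat_loc q vo" "h = qmul a b o1 y"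
      using lat_subset_lat_loc[OF q h] unfolding y(2) loc_ideal_mem by blast
    have "h = qmul a b (qmul a b o1 w) x" unfolding o1(2) wx[symmetric] by (simp add: qmul_assoc)
    then show "h \<in> lat_loc q va" unfolding x(2) loc_ideal_mem using lat_loc_mul[OF q o1(1) w(1)] by blast
  qed
qed

lemma ideal_basis_qscale:
  assumes A: "ideal_basis va" and m: "m > 0"
  shows "ideal_basis (qscale (of_nat m) \<circ> va)"
  unfolding ideal_basis_def
proof (intro conjI allI impI)
  show "qbasis (qscale (of_nat m) \<circ> va)"
    by (rule qlinear_indep[OF qlinear_scale _ ideal_basis_qbasis[OF A]]) (use m qscale_zero_iff in auto)
  fix q :: nat assume q: "prime q"
  obtain x where x: "x \<noteq> 0" "lat_loc q va = loc_ideal q x" using ideal_basis_loc_gen[OF A q] by blast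
  have "lat_loc q (qscale (of_nat m) \<circ> va) = qscale (of_nat m) ` lat_loc q va"
    by (rule qlinear_lat_loc[OF qlinear_scale, symmetric])
  also have "\<dots> = loc_ideal q (qscale (of_nat m) x)"
    unfolding x(2) loc_ideal_def image_image by (simp add: qmul_scale_right)
  finally have e: "lat_loc q (qscale (of_nat m) \<circ> va) = loc_ideal q (qscale (of_nat m) x)" .
  have "qscale (of_nat m) x \<noteq> 0" using x(1) m qscale_zero_iff[of "of_nat m" x] by simp
  then show "\<exists>x. x \<noteq> 0 \<and> lat_loc q (qscale (of_nat m) \<circ> va) = loc_ideal q x"
    using e by blast
qed

lemma lat_norm_qscale:
  assumes A: "ideal_basis va" and m: "m > 0"
  shows "lat_norm a b (lat (qscale (of_nat m) \<circ> va)) = of_nat m ^ 2 * lat_norm a b (lat va)"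
proof (rule lat_norm_eqI[OF a_neg b_neg ideal_basis_qbasis[OF ideal_basis_qscale[OF A m]]])
  have c: "lat_norm a b (lat va) > 0" "int_span (qnrd a b ` lat va) = {of_int n * lat_norm a b (lat va) | n. True}"
    using lat_norm_char[OF a_neg b_neg ideal_basis_qbasis[OF A]] by auto
  show "of_nat m ^ 2 * lat_norm a b (lat va) > 0" using c(1) m by simp
  have "qnrd a b ` lat (qscale (of_nat m) \<circ> va) = (\<lambda>r. of_nat m ^ 2 * r) ` (qnrd a b ` lat va)"
    unfolding qscale_lat[symmetric] image_image by (simp add: qnrd_scale)
  then have "int_span (qnrd a b ` lat (qscale (of_nat m) \<circ> va)) = (\<lambda>r. of_nat m ^ 2 * r) ` int_span (qnrd a b ` lat va)"
    using int_span_scale by simp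
  also have "\<dots> = {of_int n * (of_nat m ^ 2 * lat_norm a b (lat va)) | n. True}"
    unfolding c(2) by (auto simp: image_iff mult_ac)
  finally show "int_span (qnrd a b ` lat (qscale (of_nat m) \<circ> va)) =
      {of_int n * (of_nat m ^ 2 * lat_norm a b (lat va)) | n. True}" .
qed

lemma left_ideal_lat_smult:
  assumes A: "left_ideal a b (lat vo) A" and m: "m > 0"
  shows "left_ideal a b (lat vo) (lat_smult m A)"
    and "lat_norm a b (lat_smult m A) = of_nat m ^ 2 * lat_norm a b A"
proof -
  obtain va where va: "A = lat va" "ideal_basis va" using left_ideal_obtain_basis[OF A] by blast
  have smult: "lat_smult m A = lat (qscale (of_nat m) \<circ> va)"
    unfolding lat_smult_def va(1) by (rule qscale_lat)
  show "left_ideal a b (lat vo) (lat_smult m A)"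
    unfolding smult by (rule ideal_basis_left_ideal[OF ideal_basis_qscale[OF va(2) m]])
  show "lat_norm a b (lat_smult m A) = of_nat m ^ 2 * lat_norm a b A"
    unfolding smult unfolding va(1) by (rule lat_norm_qscale[OF va(2) m])
qed

lemma Tm_eq_lat_index:
  assumes A: "left_ideal a b (lat vo) A"
  shows "Tm a b (lat vo) m A = {B. left_ideal a b (lat vo) B \<and> B \<subseteq> A \<and> lat_index A B = m ^ 2}"
proof -
  have "lat_norm a b B = of_nat m * lat_norm a b A \<longleftrightarrow> lat_index A B = m ^ 2"
    if B: "left_ideal a b (lat vo) B" "B \<subseteq> A" for B
  proof -
    obtain va where va: "A = lat va" "ideal_basis va" using left_ideal_obtain_basis[OF A] by blast
    obtain vb where vb: "B = lat vb" "ideal_basis vb" using left_ideal_obtain_basis[OF B(1)] by blast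
    show ?thesis using lat_norm_eq_iff_lat_index[OF va(2) vb(2)] B(2) unfolding va(1) vb(1) by blast
  qed
  then show ?thesis unfolding Tm_def by blast
qed

lemma lat_smult_subset_of_Tm:
  assumes A: "left_ideal a b (lat vo) A" and m: "m > 0" and B: "B \<in> Tm a b (lat vo) m A"
  shows "lat_smult m A \<subseteq> B"
proof -
  obtain va where va: "A = lat va" "ideal_basis va" using left_ideal_obtain_basis[OF A] by blast
  obtain vb where vb: "B = lat vb" "ideal_basis vb"
    using left_ideal_obtain_basis B unfolding Tm_def by blast
  show ?thesis unfolding lat_smult_def va(1) vb(1)
    by (rule qscale_subset_of_lat_norm[OF va(2) vb(2) _ m]) (use B va(1) vb(1) in \<open>simp_all add: Tm_def\<close>)
qed

lemma Tm_iff_lat_smult_Tm: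
  assumes A: "left_ideal a b (lat vo) A" and B: "left_ideal a b (lat vo) B" and m: "m > 0"
  shows "B \<in> Tm a b (lat vo) m A \<longleftrightarrow> lat_smult m A \<in> Tm a b (lat vo) m B"
proof -
  have norm_iff: "lat_norm a b (lat_smult m A) = of_nat m * lat_norm a b B \<longleftrightarrow>
      lat_norm a b B = of_nat m * lat_norm a b A"
    using left_ideal_lat_smult(2)[OF A m] m by (auto simp: power2_eq_square)
  have "B \<subseteq> A" if "lat_smult m A \<subseteq> B" "lat_norm a b B = of_nat m * lat_norm a b A"
  proof -
    obtain va where va: "A = lat va" "ideal_basis va" using left_ideal_obtain_basis[OF A] by blast
    obtain vb where vb: "B = lat vb" "ideal_basis vb" using left_ideal_obtain_basis[OF B] by blast
    show ?thesis
      using subset_of_qscale_subset[OF va(2) vb(2) _ m] that unfolding lat_smult_def va(1) vb(1) by blast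
  qed
  then show ?thesis
    using lat_smult_subset_of_Tm[OF A m] left_ideal_lat_smult(1)[OF A m] B norm_iff unfolding Tm_def by blast
qed

end

lemma is_order_quat_order:
  assumes "definite_quat_alg a b" and "is_order a b O'"
  obtains vo where "O' = lat vo" "quat_order a b vo"
proof -
  obtain vo where vo: "qbasis vo" "O' = lat vo"
    using assms(2) unfolding is_order_def is_lattice_iff by blast
  have "quat_order a b vo"
    using assms vo unfolding definite_quat_alg_def is_order_def by unfold_locales auto
  then show ?thesis using that vo(2) by blast
qed

theorem lemma1:
  fixes a b :: rat and O' A :: "quat set" and m :: nat
  assumes "definite_quat_alg a b"
    and "is_order a b O'"
    and "left_ideal a b O' A"
    and "m \<ge> 1"
  shows "Tm a b O' m A = {B. left_ideal a b O' B \<and> B \<subseteq> A \<and> lat_index A B = m ^ 2}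
    \<and> (\<forall>B\<in>Tm a b O' m A. lat_smult m A \<subseteq> B)
    \<and> (\<forall>B. left_ideal a b O' B \<longrightarrow> (B \<in> Tm a b O' m A \<longleftrightarrow> lat_smult m A \<in> Tm a b O' m B))"
proof -
  obtain vo where vo: "O' = lat vo" "quat_order a b vo" using is_order_quat_order[OF assms(1,2)] .
  interpret quat_order a b vo by (rule vo(2))
  have A: "left_ideal a b (lat vo) A" using assms(3) unfolding vo(1) .
  have m: "m > 0" using assms(4) by simp
  show ?thesis unfolding vo(1)
    using Tm_eq_lat_index[OF A] lat_smult_subset_of_Tm[OF A m] Tm_iff_lat_smult_Tm[OF A _ m] by blast
qed

end
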